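(* For all configurations $C, C'$ of the NFB machine, $C \approx C'$ (machine bisimilarity) if and only if $[\![C]\!] \approx_H [\![C']\!]$ (HOcore barbed equivalence with respect to the set $H = \{c, hd, b, k, init, rec, ch\}$ of hidden names).
   Context: HOcore: processes $P,Q ::= a(x).P \mid \overline{a}\langle P\rangle \mid P \parallel Q \mid x \mid 0$ ($a$ channel names, $x$ process variables, $a(x).P$ binds $x$, $a(\_).P$ when $x$ is unused, $\parallel$ associative and commutative with unit $0$, $\mathrm{fn}(P)$ the free names). LTS: $\overline{a}\langle P\rangle \xrightarrow{\overline{a}\langle P\rangle} 0$; $a(x).Q \xrightarrow{a(P)} Q\{P/x\}$; if $P \xrightarrow{l} P'$ then $P\parallel Q \xrightarrow{l} P'\parallel Q$ (and symmetrically); if $P \xrightarrow{\overline{a}\langle R\rangle} P'$ and $Q \xrightarrow{a(R)} Q'$ then $P \parallel Q \xrightarrow{\tau} P'\parallel Q'$ (and symmetrically). $\Rightarrow$ is the reflexive transitive closure of $\xrightarrow{\tau}$. For a finite set $H$: $P\downarrow^H_a$ (resp. $P\downarrow^H_{\overline a}$) if $a\notin H$ and $P\xrightarrow{a(Q)}R$ (resp. $P\xrightarrow{\overline a\langle Q\rangle}R$) for some $Q,R$; $P\Downarrow^H_\mu$ if $P\Rightarrow P'\downarrow^H_\mu$. A barbed bisimulation w.r.t. $H$ is a symmetric relation $\mathcal R$ such that $P\mathcal RQ$ implies: $P\downarrow^H_\mu$ implies $Q\Downarrow^H_\mu$; for all $R$ with $\mathrm{fn}(R)\cap H=\emptyset$,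 $(P\parallel R)\mathcal R(Q\parallel R)$; if $P\xrightarrow\tau P'$ then $Q\Rightarrow Q'$ with $P'\mathcal RQ'$. $\approx_H$ is the largest barbed bisimulation w.r.t. $H$. Terms: $t,s ::= f \mid x \mid \lambda x.t \mid t\,s$ ($f$ free variables identified with natural numbers, $x$ bound variables, terms well formed). Stacks $\pi ::= t::\pi\mid[]$. NFB machine: configurations $\langle t,\pi,n\rangle_{\mathrm{ev}}$ and $\langle \pi, n\rangle_{\mathrm{cont}}$; transitions: $\langle t\,s,\pi,n\rangle_{\mathrm{ev}} \xrightarrow{\tau} \langle t, s::\pi, n\rangle_{\mathrm{ev}}$; $\langle \lambda x.t, s::\pi, n\rangle_{\mathrm{ev}} \xrightarrow{\tau} \langle t\{s/x\},\pi,n\rangle_{\mathrm{ev}}$; $\langle \lambda x.t, [], n\rangle_{\mathrm{ev}} \xrightarrow{\lambda} \langle t\{n/x\}, [], n+1\rangle_{\mathrm{ev}}$; $\langle f, \pi, n\rangle_{\mathrm{ev}} \xrightarrow{f} \langle \pi, n\rangle_{\mathrm{cont}}$; $\langle [], n\rangle_{\mathrm{cont}} \xrightarrow{\mathsf{done}}$ (terminating); $\langle t::\pi, n\rangle_{\mathrm{cont}} \xrightarrow{\mathsf{enter}} \langle t, [], n\rangle_{\mathrm{ev}}$; $\langle t::\pi, n\rangle_{\mathrm{cont}} \xrightarrow{\mathsf{skip}} \langle \pi, n\rangle_{\mathrm{cont}}$. Machine bisimulation: symmetric $\mathcal R$ such that $C_1\mathcal RC_2$ implies for every flag $F$: if $C_1\xrightarrow\tau^*\xrightarrow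 F C_1'$ then $C_2\xrightarrow\tau^*\xrightarrow F C_2'$ with $C_1'\mathcal RC_2'$; if $C_1\xrightarrow\tau^*\xrightarrow F$ (terminating) then $C_2\xrightarrow\tau^*\xrightarrow F$ (terminating). $\approx$ is the largest machine bisimulation. Translation into HOcore, using channel names $c, hd, b, k, init, rec, ch$ and flag names $\lambda, \mathsf{enter}, \mathsf{skip}, \mathsf{done}, suc, z$ (bound $\lambda$-variables become process variables; $p$ is a fresh variable). Internal choice: $P + Q = \overline{ch}\langle P\rangle \parallel \overline{ch}\langle Q\rangle \parallel ch(x).ch(\_).x$. Numbers: $[0] = z(\_).\overline{init}\langle 0\rangle$, $[n+1] = suc(\_).[n]$. $[\![t\,s]\!] = c(p).([\![t]\!] \parallel \overline{c}\langle \overline{hd}\langle[\![s]\!]\rangle \parallel \overline{c}\langle p\rangle\rangle)$; $[\![\lambda x.t]\!] = c(p).(p \parallel \overline{b}\langle \mathit{Restart}\rangle \parallel hd(x).b(\_).[\![t]\!])$; $[\![x]\!] = x$; $[\![f]\!] = [f]$; $\mathit{Restart} = \lambda(\_).k(x).(\overline{hd}\langle x\rangle \parallel \overline{k}\langle suc(\_).x\rangle \parallel \overline{c}\langle[\![[]]\!]\rangle \parallel \overline{b}\langle 0\rangle)$; $\mathit{Rec} = init(\_).rec(x).(x \parallel \overline{rec}\langle x\rangle \parallel \mathit{Cont})$; $\mathit{Cont} = c(p).(p \parallel \overline{b}\langle \mathsf{done}(\_).0\rangle \parallel hd(x).b(\_).\mathit{Choice}(x))$; $\mathit{Choice}(P)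 = \mathsf{enter}(\_).c(\_).(P \parallel \overline{c}\langle[\![[]]\!]\rangle) + \mathsf{skip}(\_).\overline{init}\langle 0\rangle$; $[\![[]]\!] = b(x).x$; $[\![t::\pi]\!] = \overline{hd}\langle[\![t]\!]\rangle \parallel \overline{c}\langle[\![\pi]\!]\rangle$; $[\![\langle t,\pi,n\rangle_{\mathrm{ev}}]\!] = [\![t]\!] \parallel \overline{c}\langle[\![\pi]\!]\rangle \parallel \overline{k}\langle [n]\rangle \parallel \mathit{Rec} \parallel \overline{rec}\langle\mathit{Rec}\rangle$; $[\![\langle \pi,n\rangle_{\mathrm{cont}}]\!] = \overline{c}\langle[\![\pi]\!]\rangle \parallel \overline{k}\langle [n]\rangle \parallel \mathit{Cont} \parallel \mathit{Rec} \parallel \overline{rec}\langle\mathit{Rec}\rangle$. *)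

theory Defs
  imports Main
begin

text \<open>Channel names: the hidden names, the flag names, and infinitely many other names.\<close>
datatype name = NC | NHd | NB | NK | NInit | NRec | NCh
  | NLam | NEnter | NSkip | NDone | NSuc | NZ | NOther nat

text \<open>Process variables: those coming from lambda-bound variables (LV x), and the
  auxiliary variables p (VP), x (VX), the choice variable (VY) and the unused one (VU).\<close>
datatype pvar = LV nat | VP | VX | VY | VU

datatype proc = Inp name pvar proc | Out name proc | Par proc proc | Var pvar | Nil

fun psubst :: "proc \<Rightarrow> pvar \<Rightarrow> proc \<Rightarrow> proc" where
  "psubst (Inp a y Q) x P = (if y = x then Inp a y Q else Inp a y (psubst Q x P))"
| "psubst (Out a Q) x P = Out a (psubst Q x P)"
| "psubst (Par Q1 Q2) x P = Par (psubst Q1 x P) (psubst Q2 x P)"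
| "psubst (Var y) x P = (if y = x then P else Var y)"
| "psubst Nil x P = Nil"

fun fn :: "proc \<Rightarrow> name set" where
  "fn (Inp a y Q) = insert a (fn Q)"
| "fn (Out a Q) = insert a (fn Q)"
| "fn (Par Q1 Q2) = fn Q1 \<union> fn Q2"
| "fn (Var y) = {}"
| "fn Nil = {}"

fun fv :: "proc \<Rightarrow> pvar set" where
  "fv (Inp a y Q) = fv Q - {y}"
| "fv (Out a Q) = fv Q"
| "fv (Par Q1 Q2) = fv Q1 \<union> fv Q2"
| "fv (Var y) = {y}"
| "fv Nil = {}"

datatype plab = LIn name proc | LOut name proc | LTau

inductive ptrans :: "proc \<Rightarrow> plab \<Rightarrow> proc \<Rightarrow> bool" where
  out: "ptrans (Out a P) (LOut a P) Nil"
| inp: "ptrans (Inp a x Q) (LIn a P) (psubst Q x P)"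
| parL: "ptrans P l P' \<Longrightarrow> ptrans (Par P Q) l (Par P' Q)"
| parR: "ptrans Q l Q' \<Longrightarrow> ptrans (Par P Q) l (Par P Q')"
| commL: "ptrans P (LOut a R) P' \<Longrightarrow> ptrans Q (LIn a R) Q' \<Longrightarrow> ptrans (Par P Q) LTau (Par P' Q')"
| commR: "ptrans P (LIn a R) P' \<Longrightarrow> ptrans Q (LOut a R) Q' \<Longrightarrow> ptrans (Par P Q) LTau (Par P' Q')"

definition tau_star :: "proc \<Rightarrow> proc \<Rightarrow> bool" where
  "tau_star = (\<lambda>P Q. ptrans P LTau Q)\<^sup>*\<^sup>*"

datatype barb = BIn name | BOut name

definition has_barb :: "name set \<Rightarrow> proc \<Rightarrow> barb \<Rightarrow> bool" where
  "has_barb H P \<mu> = (case \<mu> of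
      BIn a \<Rightarrow> a \<notin> H \<and> (\<exists>Q R. ptrans P (LIn a Q) R)
    | BOut a \<Rightarrow> a \<notin> H \<and> (\<exists>Q R. ptrans P (LOut a Q) R))"

definition weak_barb :: "name set \<Rightarrow> proc \<Rightarrow> barb \<Rightarrow> bool" where
  "weak_barb H P \<mu> = (\<exists>P'. tau_star P P' \<and> has_barb H P' \<mu>)"

definition barbed_bisim :: "name set \<Rightarrow> (proc \<Rightarrow> proc \<Rightarrow> bool) \<Rightarrow> bool" where
  "barbed_bisim H Rel = (symp Rel \<and> (\<forall>P Q. Rel P Q \<longrightarrow>
      (\<forall>\<mu>. has_barb H P \<mu> \<longrightarrow> weak_barb H Q \<mu>) \<and>
      (\<forall>R. fn R \<inter> H = {} \<and> fv R = {} \<longrightarrow> Rel (Par P R) (Par Q R)) \<and>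
      (\<forall>P'. ptrans P LTau P' \<longrightarrow> (\<exists>Q'. tau_star Q Q' \<and> Rel P' Q'))))"

definition barbed_equiv :: "name set \<Rightarrow> proc \<Rightarrow> proc \<Rightarrow> bool" where
  "barbed_equiv H P Q = (\<exists>Rel. barbed_bisim H Rel \<and> Rel P Q)"

datatype lterm = FV nat | BV nat | Lam nat lterm | App lterm lterm

fun tsubst :: "lterm \<Rightarrow> nat \<Rightarrow> lterm \<Rightarrow> lterm" where
  "tsubst (FV f) x s = FV f"
| "tsubst (BV y) x s = (if y = x then s else BV y)"
| "tsubst (Lam y t) x s = (if y = x then Lam y t else Lam y (tsubst t x s))"
| "tsubst (App t1 t2) x s = App (tsubst t1 x s) (tsubst t2 x s)"

fun bvs_free :: "lterm \<Rightarrow> nat set" where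
  "bvs_free (FV f) = {}"
| "bvs_free (BV y) = {y}"
| "bvs_free (Lam y t) = bvs_free t - {y}"
| "bvs_free (App t1 t2) = bvs_free t1 \<union> bvs_free t2"

definition wf_term :: "lterm \<Rightarrow> bool" where
  "wf_term t = (bvs_free t = {})"

datatype conf = Ev lterm "lterm list" nat | Co "lterm list" nat

definition wf_conf :: "conf \<Rightarrow> bool" where
  "wf_conf C = (case C of
      Ev t \<pi> n \<Rightarrow> wf_term t \<and> (\<forall>s \<in> set \<pi>. wf_term s)
    | Co \<pi> n \<Rightarrow> (\<forall>s \<in> set \<pi>. wf_term s))"

datatype flag = FLam | FFree nat | FDone | FEnter | FSkip

inductive mtau :: "conf \<Rightarrow> conf \<Rightarrow> bool" where
  "mtau (Ev (App t s) \<pi> n) (Ev t (s # \<pi>) n)"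
| "mtau (Ev (Lam x t) (s # \<pi>) n) (Ev (tsubst t x s) \<pi> n)"

inductive mstep :: "conf \<Rightarrow> flag \<Rightarrow> conf \<Rightarrow> bool" where
  "mstep (Ev (Lam x t) [] n) FLam (Ev (tsubst t x (FV n)) [] (Suc n))"
| "mstep (Ev (FV f) \<pi> n) (FFree f) (Co \<pi> n)"
| "mstep (Co (t # \<pi>) n) FEnter (Ev t [] n)"
| "mstep (Co (t # \<pi>) n) FSkip (Co \<pi> n)"

inductive mterm :: "conf \<Rightarrow> flag \<Rightarrow> bool" where
  "mterm (Co [] n) FDone"

definition mach_bisim :: "(conf \<Rightarrow> conf \<Rightarrow> bool) \<Rightarrow> bool" where
  "mach_bisim Rel = (symp Rel \<and> (\<forall>C1 C2. Rel C1 C2 \<longrightarrow> (\<forall>F.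
      (\<forall>C1'. (\<exists>D. mtau\<^sup>*\<^sup>* C1 D \<and> mstep D F C1') \<longrightarrow>
          (\<exists>C2'. (\<exists>D. mtau\<^sup>*\<^sup>* C2 D \<and> mstep D F C2') \<and> Rel C1' C2')) \<and>
      ((\<exists>D. mtau\<^sup>*\<^sup>* C1 D \<and> mterm D F) \<longrightarrow> (\<exists>D. mtau\<^sup>*\<^sup>* C2 D \<and> mterm D F)))))"

definition mach_bisimilar :: "conf \<Rightarrow> conf \<Rightarrow> bool" where
  "mach_bisimilar C1 C2 = (\<exists>Rel. mach_bisim Rel \<and> Rel C1 C2)"

definition plus :: "proc \<Rightarrow> proc \<Rightarrow> proc" where
  "plus P Q = Par (Out NCh P) (Par (Out NCh Q) (Inp NCh VY (Inp NCh VU (Var VY))))"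

fun num :: "nat \<Rightarrow> proc" where
  "num 0 = Inp NZ VU (Out NInit Nil)"
| "num (Suc n) = Inp NSuc VU (num n)"

definition stk_nil :: proc where
  "stk_nil = Inp NB VX (Var VX)"

definition Restart :: proc where
  "Restart = Inp NLam VU (Inp NK VX
     (Par (Out NHd (Var VX)) (Par (Out NK (Inp NSuc VU (Var VX)))
        (Par (Out NC stk_nil) (Out NB Nil)))))"

fun trm :: "lterm \<Rightarrow> proc" where
  "trm (App t s) = Inp NC VP (Par (trm t) (Out NC (Par (Out NHd (trm s)) (Out NC (Var VP)))))"
| "trm (Lam x t) = Inp NC VP (Par (Var VP) (Par (Out NB Restart) (Inp NHd (LV x) (Inp NB VU (trm t)))))"
| "trm (BV x) = Var (LV x)"
| "trm (FV f) = num f"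

definition Choice :: "proc \<Rightarrow> proc" where
  "Choice P = plus (Inp NEnter VU (Inp NC VU (Par P (Out NC stk_nil))))
                   (Inp NSkip VU (Out NInit Nil))"

definition ContP :: proc where
  "ContP = Inp NC VP (Par (Var VP) (Par (Out NB (Inp NDone VU Nil))
              (Inp NHd VX (Inp NB VU (Choice (Var VX))))))"

definition RecP :: proc where
  "RecP = Inp NInit VU (Inp NRec VX (Par (Var VX) (Par (Out NRec (Var VX)) ContP)))"

fun stk :: "lterm list \<Rightarrow> proc" where
  "stk [] = stk_nil"
| "stk (t # \<pi>) = Par (Out NHd (trm t)) (Out NC (stk \<pi>))"

fun tr_conf :: "conf \<Rightarrow> proc" where
  "tr_conf (Ev t \<pi> n) = Par (trm t) (Par (Out NC (stk \<pi>)) (Par (Out NK (num n)) (Par RecP (Out NRec RecP))))"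
| "tr_conf (Co \<pi> n) = Par (Out NC (stk \<pi>)) (Par (Out NK (num n)) (Par ContP (Par RecP (Out NRec RecP))))"

definition Hidden :: "name set" where
  "Hidden = {NC, NHd, NB, NK, NInit, NRec, NCh}"

end

theory Submission
  imports Defs "HOL-Library.Multiset"
begin

(*
  A process is handled as the multiset ("soup") of its parallel components. Encoded
  configurations output only on hidden names, so a closed context without hidden names can
  influence them only by sending inputs on visible names; barbed equivalence of encodings thus
  follows from a bisimulation on soups that matches internal steps and visible inputs.

  Every soup reachable from the encoding of C is, up to deterministic administrative steps, the
  encoding of a configuration reachable from C by machine tau-steps, or a state in which the
  internal choice between enter and skip has already been made; its visible inputs are exactly
  the flags of the machine. Machine bisimilarity therefore induces such a soup bisimulation.

  Conversely, barbed equivalence is probed by running an encoding next to outputs on flag names.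
  Encodings have no visible output barbs, so an equivalent process has to consume the same
  flags, i.e. perform the same machine steps; a state that has resolved its internal choice is
  told apart from one that has not by its barbs on enter and skip.
*)

section \<open>Processes as multisets of parallel components\<close>

fun comps :: "proc \<Rightarrow> proc multiset" where
  "comps (Par P Q) = comps P + comps Q"
| "comps Nil = {#}"
| "comps P = {#P#}"

fun soup_trans :: "proc multiset \<Rightarrow> plab \<Rightarrow> proc multiset \<Rightarrow> bool" where
  "soup_trans M (LOut a X) M' = (Out a X \<in># M \<and> M' = M - {#Out a X#})"
| "soup_trans M (LIn a X) M' =
     (\<exists>y Q. Inp a y Q \<in># M \<and> M' = M - {#Inp a y Q#} + comps (psubst Q y X))"
| "soup_trans M LTau M' = (\<exists>a X y Q. Out a X \<in># M \<and> Inp a y Q \<in># M \<and>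
     M' = M - {#Out a X, Inp a y Q#} + comps (psubst Q y X))"

lemmas multiset_eq_count = multiset_eq_iff count_greater_zero_iff[symmetric]

declare count_greater_zero_iff [simp del] \<comment> \<open>it would undo the second half of multiset_eq_count\<close>

lemma soup_inI:
  "Inp a y Q \<in># M \<Longrightarrow> M' = M - {#Inp a y Q#} + comps (psubst Q y X) \<Longrightarrow> soup_trans M (LIn a X) M'"
  unfolding soup_trans.simps by blast

lemma soup_tauI:
  "Out a X \<in># M \<Longrightarrow> Inp a y Q \<in># M \<Longrightarrow> M' = M - {#Out a X, Inp a y Q#} + comps (psubst Q y X) \<Longrightarrow>
   soup_trans M LTau M'"
  unfolding soup_trans.simps by blast

lemma soup_trans_frame: "soup_trans M l M' \<Longrightarrow> soup_trans (M + K) l (M' + K)"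
proof (cases l)
  case (LIn a X)
  assume "soup_trans M l M'"
  then obtain y Q where "Inp a y Q \<in># M" "M' = M - {#Inp a y Q#} + comps (psubst Q y X)"
    using LIn by (simp only: soup_trans.simps) blast
  then show ?thesis
    unfolding LIn by (intro soup_inI) (auto simp: multiset_eq_count)
next
  case LTau
  assume "soup_trans M l M'"
  then obtain a X y Q where "Out a X \<in># M" "Inp a y Q \<in># M"
    "M' = M - {#Out a X, Inp a y Q#} + comps (psubst Q y X)"
    using LTau by auto
  then show ?thesis
    unfolding LTau by (intro soup_tauI) (auto simp: multiset_eq_count)
qed (auto simp: multiset_eq_count)

lemma soup_trans_comm:
  assumes "soup_trans A (LOut a X) A'" and "soup_trans B (LIn a X) B'"
  shows "soup_trans (A + B) LTau (A' + B')"
proof -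
  obtain y Q where "Inp a y Q \<in># B" "B' = B - {#Inp a y Q#} + comps (psubst Q y X)"
    using assms(2) by auto
  then show ?thesis
    using assms(1) by (intro soup_tauI) (auto simp: multiset_eq_count)
qed

lemma ptrans_soup_trans: "ptrans P l P' \<Longrightarrow> soup_trans (comps P) l (comps P')"
proof (induction rule: ptrans.induct)
  case (parL P l P' Q)
  then show ?case using soup_trans_frame by simp
next
  case (parR Q l Q' P)
  then show ?case using soup_trans_frame[of "comps Q" l "comps Q'" "comps P"] by (simp add: add.commute)
next
  case (commL P a R P' Q Q')
  then show ?case using soup_trans_comm by simp
next
  case (commR P a R P' Q Q')
  then show ?case using soup_trans_comm[of "comps Q" a R "comps Q'"] by (simp add: add.commute)
qed auto

lemma soup_trans_plus_visible_cases:
  assumes "soup_trans (A + B) l M'" "l \<noteq> LTau"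
  obtains (left) A' where "soup_trans A l A'" "M' = A' + B"
  | (right) B' where "soup_trans B l B'" "M' = A + B'"
proof (cases l)
  case (LOut a X)
  with assms have o: "Out a X \<in># A + B" and M': "M' = A + B - {#Out a X#}" by auto
  show ?thesis
  proof (cases "Out a X \<in># A")
    case True
    then show ?thesis using left[of "A - {#Out a X#}"] LOut M'
      by (auto simp: multiset_eq_count)
  next
    case False
    then show ?thesis using right[of "B - {#Out a X#}"] LOut M' o
      by (auto simp: multiset_eq_count)
  qed
next
  case (LIn a X)
  with assms obtain y Q where i: "Inp a y Q \<in># A + B"
    and M': "M' = A + B - {#Inp a y Q#} + comps (psubst Q y X)" by (simp only: soup_trans.simps) blast
  let ?C = "comps (psubst Q y X)"
  show ?thesis
  proof (cases "Inp a y Q \<in># A")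
    case True
    then have "soup_trans A l (A - {#Inp a y Q#} + ?C)" unfolding LIn by (rule soup_inI[OF _ refl])
    moreover have "M' = A - {#Inp a y Q#} + ?C + B" using M' True
      by (auto simp: multiset_eq_count)
    ultimately show ?thesis by (rule left)
  next
    case False
    then have "Inp a y Q \<in># B" using i by simp
    then have "soup_trans B l (B - {#Inp a y Q#} + ?C)" unfolding LIn by (rule soup_inI[OF _ refl])
    moreover have "M' = A + (B - {#Inp a y Q#} + ?C)" using M' False i
      by (auto simp: multiset_eq_count)
    ultimately show ?thesis by (rule right)
  qed
qed (use assms(2) in simp)

lemma soup_trans_plus_cases:
  assumes "soup_trans (A + B) l M'"
  obtains (left) A' where "soup_trans A l A'" "M' = A' + B"
  | (right) B' where "soup_trans B l B'" "M' = A + B'"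
  | (comm_left) a X A' B' where "l = LTau" "soup_trans A (LOut a X) A'" "soup_trans B (LIn a X) B'"
      "M' = A' + B'"
  | (comm_right) a X A' B' where "l = LTau" "soup_trans A (LIn a X) A'" "soup_trans B (LOut a X) B'"
      "M' = A' + B'"
proof (cases "l = LTau")
  case False
  then show ?thesis using soup_trans_plus_visible_cases[OF assms] left right by metis
next
  case LTau: True
  with assms obtain a X y Q where o: "Out a X \<in># A + B" and i: "Inp a y Q \<in># A + B"
    and M': "M' = A + B - {#Out a X, Inp a y Q#} + comps (psubst Q y X)" by (simp only: soup_trans.simps) blast
  let ?C = "comps (psubst Q y X)"
  consider "Out a X \<in># A" "Inp a y Q \<in># A" | "Out a X \<in># B" "Inp a y Q \<in># B"
    | "Out a X \<in># A" "Inp a y Q \<in># B" | "Out a X \<in># B" "Inp a y Q \<in># A"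
    using o i by auto
  then show ?thesis
  proof cases
    case 1
    then have "soup_trans A l (A - {#Out a X, Inp a y Q#} + ?C)" unfolding LTau by (rule soup_tauI[OF _ _ refl])
    moreover have "M' = A - {#Out a X, Inp a y Q#} + ?C + B" using M' 1
      by (auto simp: multiset_eq_count)
    ultimately show ?thesis by (rule left)
  next
    case 2
    then have "soup_trans B l (B - {#Out a X, Inp a y Q#} + ?C)" unfolding LTau by (rule soup_tauI[OF _ _ refl])
    moreover have "M' = A + (B - {#Out a X, Inp a y Q#} + ?C)" using M' 2
      by (auto simp: multiset_eq_count)
    ultimately show ?thesis by (rule right)
  next
    case 3
    then have "soup_trans A (LOut a X) (A - {#Out a X#})" "soup_trans B (LIn a X) (B - {#Inp a y Q#} + ?C)"
      using soup_inI[OF _ refl] by simp_all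
    moreover have "M' = A - {#Out a X#} + (B - {#Inp a y Q#} + ?C)" using M' 3
      by (auto simp: multiset_eq_count)
    ultimately show ?thesis by (rule comm_left[OF LTau])
  next
    case 4
    then have "soup_trans A (LIn a X) (A - {#Inp a y Q#} + ?C)" "soup_trans B (LOut a X) (B - {#Out a X#})"
      using soup_inI[OF _ refl] by simp_all
    moreover have "M' = A - {#Inp a y Q#} + ?C + (B - {#Out a X#})" using M' 4
      by (auto simp: multiset_eq_count)
    ultimately show ?thesis by (rule comm_right[OF LTau])
  qed
qed

lemma soup_trans_ptrans: "soup_trans (comps P) l M' \<Longrightarrow> \<exists>P'. ptrans P l P' \<and> comps P' = M'"
proof (induction P arbitrary: l M')
  case (Par P1 P2)
  from Par.prems have "soup_trans (comps P1 + comps P2) l M'" by simp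
  then show ?case
  proof (cases rule: soup_trans_plus_cases)
    case (left A')
    then obtain P1' where "ptrans P1 l P1'" "comps P1' = A'" using Par.IH(1) by blast
    then show ?thesis using left by (intro exI[of _ "Par P1' P2"]) (simp add: ptrans.parL)
  next
    case (right B')
    then obtain P2' where "ptrans P2 l P2'" "comps P2' = B'" using Par.IH(2) by blast
    then show ?thesis using right by (intro exI[of _ "Par P1 P2'"]) (simp add: ptrans.parR)
  next
    case (comm_left a X A' B')
    then obtain P1' P2' where "ptrans P1 (LOut a X) P1'" "comps P1' = A'"
      "ptrans P2 (LIn a X) P2'" "comps P2' = B'" using Par.IH by meson
    then show ?thesis using comm_left by (intro exI[of _ "Par P1' P2'"]) (simp add: ptrans.commL)
  next
    case (comm_right a X A' B')
    then obtain P1' P2' where "ptrans P1 (LIn a X) P1'" "comps P1' = A'"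
      "ptrans P2 (LOut a X) P2'" "comps P2' = B'" using Par.IH by meson
    then show ?thesis using comm_right by (intro exI[of _ "Par P1' P2'"]) (simp add: ptrans.commR)
  qed
next
  case (Inp a x Q)
  then show ?case by (cases l) (auto intro: ptrans.inp)
next
  case (Out a Q)
  then show ?case by (cases l) (auto intro: ptrans.out)
next
  case (Var x)
  then show ?case by (cases l) auto
next
  case Nil
  then show ?case by (cases l) auto
qed

declare soup_trans.simps [simp del]

definition soup_tau :: "proc multiset \<Rightarrow> proc multiset \<Rightarrow> bool" where
  "soup_tau M M' = soup_trans M LTau M'"

definition soup_barb :: "name set \<Rightarrow> proc multiset \<Rightarrow> barb \<Rightarrow> bool" where
  "soup_barb H M \<mu> = (case \<mu> of
      BIn a \<Rightarrow> a \<notin> H \<and> (\<exists>y Q. Inp a y Q \<in># M)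
    | BOut a \<Rightarrow> a \<notin> H \<and> (\<exists>X. Out a X \<in># M))"

lemma has_barb_iff_soup_barb: "has_barb H P \<mu> \<longleftrightarrow> soup_barb H (comps P) \<mu>"
proof -
  have "(\<exists>Q R. ptrans P (LIn a Q) R) \<longleftrightarrow> (\<exists>y Q. Inp a y Q \<in># comps P)" for a
  proof
    assume "\<exists>Q R. ptrans P (LIn a Q) R"
    then obtain Q R where "ptrans P (LIn a Q) R" by blast
    from ptrans_soup_trans[OF this] show "\<exists>y Q. Inp a y Q \<in># comps P"
      unfolding soup_trans.simps by blast
  next
    assume "\<exists>y Q. Inp a y Q \<in># comps P"
    then show "\<exists>Q R. ptrans P (LIn a Q) R"
      by (metis soup_inI soup_trans_ptrans)
  qed
  moreover have "(\<exists>Q R. ptrans P (LOut a Q) R) \<longleftrightarrow> (\<exists>X. Out a X \<in># comps P)" for a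
    by (metis ptrans_soup_trans soup_trans.simps(1) soup_trans_ptrans)
  ultimately show ?thesis
    by (simp add: has_barb_def soup_barb_def split: barb.split)
qed

lemma tau_star_soup_tau_star: "tau_star P P' \<Longrightarrow> soup_tau\<^sup>*\<^sup>* (comps P) (comps P')"
  unfolding tau_star_def
  by (induction rule: rtranclp_induct)
    (auto dest: ptrans_soup_trans simp: soup_tau_def intro: rtranclp.rtrancl_into_rtrancl)

lemma soup_tau_star_tau_star:
  "soup_tau\<^sup>*\<^sup>* (comps P) M' \<Longrightarrow> \<exists>P'. tau_star P P' \<and> comps P' = M'"
proof (induction rule: rtranclp_induct)
  case (step M1 M2)
  then obtain P1 where "tau_star P P1" "comps P1 = M1" by blast
  moreover obtain P2 where "ptrans P1 LTau P2" "comps P2 = M2"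
    using soup_trans_ptrans step(2) calculation(2) unfolding soup_tau_def by blast
  ultimately show ?case by (auto simp: tau_star_def intro: rtranclp.rtrancl_into_rtrancl)
qed (auto simp: tau_star_def)

lemma weak_barb_iff_soup: "weak_barb H P \<mu> \<longleftrightarrow> (\<exists>M'. soup_tau\<^sup>*\<^sup>* (comps P) M' \<and> soup_barb H M' \<mu>)"
  unfolding weak_barb_def has_barb_iff_soup_barb
  by (metis soup_tau_star_tau_star tau_star_soup_tau_star)

lemma soup_tau_star_frame: "soup_tau\<^sup>*\<^sup>* M M' \<Longrightarrow> soup_tau\<^sup>*\<^sup>* (M + K) (M' + K)"
  by (induction rule: rtranclp_induct)
    (auto dest: soup_trans_frame[where K = K] simp: soup_tau_def intro: rtranclp.rtrancl_into_rtrancl)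

lemma soup_tau_star_frame_left: "soup_tau\<^sup>*\<^sup>* M M' \<Longrightarrow> soup_tau\<^sup>*\<^sup>* (K + M) (K + M')"
  using soup_tau_star_frame[of M M' K] by (simp add: add.commute)

fun receive :: "proc \<Rightarrow> name \<Rightarrow> proc \<Rightarrow> proc multiset option" where
  "receive (Inp b y Q) a X = (if b = a then Some (comps (psubst Q y X)) else None)"
| "receive _ a X = None"

lemma receive_SomeE:
  assumes "receive p a X = Some R"
  obtains y Q where "p = Inp a y Q" "R = comps (psubst Q y X)"
  using assms by (cases p) (auto split: if_splits)

text \<open>The case distinction on receive lets the simplifier first determine which components can
  communicate and only then compute the resulting multisets; this is how the transitions of
  explicitly given soups are evaluated below.\<close>

lemma soup_in_iff:
  "soup_trans M (LIn a X) M' \<longleftrightarrow>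
     (\<exists>p\<in>#M. case receive p a X of None \<Rightarrow> False | Some R \<Rightarrow> M' = M - {#p#} + R)"
  unfolding soup_trans.simps by (force elim!: receive_SomeE split: option.splits)

fun react :: "proc \<Rightarrow> proc \<Rightarrow> proc multiset option" where
  "react (Out a X) q = receive q a X"
| "react _ q = None"

lemma soup_tau_iff:
  "soup_tau M M' \<longleftrightarrow>
     (\<exists>p\<in>#M. \<exists>q\<in>#M. case react p q of None \<Rightarrow> False | Some R \<Rightarrow> M' = M - {#p, q#} + R)"
proof
  assume "soup_tau M M'"
  then obtain a X y Q where "Out a X \<in># M" "Inp a y Q \<in># M"
    "M' = M - {#Out a X, Inp a y Q#} + comps (psubst Q y X)"
    unfolding soup_tau_def soup_trans.simps by blast
  then show "\<exists>p\<in>#M. \<exists>q\<in>#M. case react p q of None \<Rightarrow> False | Some R \<Rightarrow> M' = M - {#p, q#} + R"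
    by force
next
  assume "\<exists>p\<in>#M. \<exists>q\<in>#M. case react p q of None \<Rightarrow> False | Some R \<Rightarrow> M' = M - {#p, q#} + R"
  then obtain p q R where pq: "p \<in># M" "q \<in># M" "react p q = Some R" "M' = M - {#p, q#} + R"
    by (auto split: option.splits)
  then obtain a X y Q where "p = Out a X" "q = Inp a y Q" "R = comps (psubst Q y X)"
    by (cases p) (auto elim: receive_SomeE)
  then show "soup_tau M M'"
    using pq unfolding soup_tau_def by (auto intro: soup_tauI)
qed

section \<open>Barbed bisimulations up to closed contexts\<close>

lemma fv_psubst: "fv (psubst Q x P) \<subseteq> (fv Q - {x}) \<union> fv P"
  by (induction Q) auto

lemma fn_psubst: "fn (psubst Q x P) \<subseteq> fn Q \<union> fn P"
  by (induction Q) auto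

lemma fv_comps: "p \<in># comps P \<Longrightarrow> fv p \<subseteq> fv P"
  by (induction P rule: comps.induct) auto

lemma fn_comps: "p \<in># comps P \<Longrightarrow> fn p \<subseteq> fn P"
  by (induction P rule: comps.induct) auto

definition internal_soup :: "name set \<Rightarrow> proc multiset \<Rightarrow> bool" where
  "internal_soup H M = (\<forall>p\<in>#M. fv p = {} \<and> (\<forall>a X. p = Out a X \<longrightarrow> a \<in> H))"

definition context_soup :: "name set \<Rightarrow> proc multiset \<Rightarrow> bool" where
  "context_soup H K = (\<forall>p\<in>#K. fv p = {} \<and> fn p \<inter> H = {})"

text \<open>The systems related by a soup bisimulation only output on hidden names, so a closed
  context without hidden names can interact with them only by feeding them inputs on visible
  names; this is why only such inputs, and not arbitrary contexts, need to be matched.\<close>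

definition soup_bisim :: "name set \<Rightarrow> (proc multiset \<Rightarrow> proc multiset \<Rightarrow> bool) \<Rightarrow> bool" where
  "soup_bisim H S = (symp S \<and> (\<forall>M1 M2. S M1 M2 \<longrightarrow> internal_soup H M1 \<and>
     (\<forall>M1'. soup_tau M1 M1' \<longrightarrow> (\<exists>M2'. soup_tau\<^sup>*\<^sup>* M2 M2' \<and> S M1' M2')) \<and>
     (\<forall>a X M1'. a \<notin> H \<longrightarrow> fv X = {} \<longrightarrow> soup_trans M1 (LIn a X) M1' \<longrightarrow>
         (\<exists>M2a M2'. soup_tau\<^sup>*\<^sup>* M2 M2a \<and> soup_trans M2a (LIn a X) M2' \<and> S M1' M2'))))"

definition in_context :: "name set \<Rightarrow> (proc multiset \<Rightarrow> proc multiset \<Rightarrow> bool) \<Rightarrow> proc \<Rightarrow> proc \<Rightarrow> bool" where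
  "in_context H S P Q = (\<exists>K M1 M2. comps P = K + M1 \<and> comps Q = K + M2 \<and> context_soup H K \<and> S M1 M2)"

lemma context_soup_comps: "fn R \<inter> H = {} \<Longrightarrow> fv R = {} \<Longrightarrow> context_soup H (comps R)"
  unfolding context_soup_def using fv_comps fn_comps by blast

lemma context_soup_plus: "context_soup H A \<Longrightarrow> context_soup H B \<Longrightarrow> context_soup H (A + B)"
  unfolding context_soup_def by auto

lemma context_soup_diff: "context_soup H A \<Longrightarrow> context_soup H (A - B)"
  unfolding context_soup_def by (meson in_diffD)

lemma context_soup_out:
  assumes "context_soup H K" "soup_trans K (LOut a X) K'"
  shows "context_soup H K'" "a \<notin> H" "fv X = {}"
  using assms unfolding context_soup_def soup_trans.simps by (auto dest: in_diffD)

lemma context_soup_tau: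
  assumes K: "context_soup H K" and "soup_tau K K'"
  shows "context_soup H K'"
proof -
  obtain a X y Q where io: "Out a X \<in># K" "Inp a y Q \<in># K"
    and K': "K' = K - {#Out a X, Inp a y Q#} + comps (psubst Q y X)"
    using assms(2) unfolding soup_tau_def by (simp only: soup_trans.simps) blast
  have "fv (Out a X) = {}" "fv (Inp a y Q) = {}" "fn (Out a X) \<inter> H = {}" "fn (Inp a y Q) \<inter> H = {}"
    using K io unfolding context_soup_def by blast+
  then have "fv (psubst Q y X) = {}" "fn (psubst Q y X) \<inter> H = {}"
    using fv_psubst[of Q y X] fn_psubst[of Q y X] by auto
  then show ?thesis
    unfolding K' by (intro context_soup_plus context_soup_diff K context_soup_comps)
qed

lemma soup_bisimD:
  assumes "soup_bisim H S" "S M1 M2"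
  shows "S M2 M1"
    and "internal_soup H M1"
    and "soup_tau M1 M1' \<Longrightarrow> \<exists>M2'. soup_tau\<^sup>*\<^sup>* M2 M2' \<and> S M1' M2'"
    and "a \<notin> H \<Longrightarrow> fv X = {} \<Longrightarrow> soup_trans M1 (LIn a X) M1' \<Longrightarrow>
      \<exists>M2a M2'. soup_tau\<^sup>*\<^sup>* M2 M2a \<and> soup_trans M2a (LIn a X) M2' \<and> S M1' M2'"
  using assms unfolding soup_bisim_def by (blast dest: sympD)+

lemma soup_bisim_barb:
  assumes S: "soup_bisim H S" "S M1 M2" and "soup_barb H (K + M1) \<mu>"
  shows "\<exists>N. soup_tau\<^sup>*\<^sup>* (K + M2) N \<and> soup_barb H N \<mu>"
proof (cases \<mu>)
  case (BIn a)
  with assms(3) obtain y R where a: "a \<notin> H" "Inp a y R \<in># K + M1" by (auto simp: soup_barb_def)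
  show ?thesis
  proof (cases "Inp a y R \<in># K")
    case True
    then show ?thesis using a BIn by (intro exI[of _ "K + M2"]) (auto simp: soup_barb_def)
  next
    case False
    then have "Inp a y R \<in># M1" using a(2) by simp
    then have in1: "soup_trans M1 (LIn a Nil) (M1 - {#Inp a y R#} + comps (psubst R y Nil))"
      by (rule soup_inI[OF _ refl])
    obtain M2a M2' where M2: "soup_tau\<^sup>*\<^sup>* M2 M2a" "soup_trans M2a (LIn a Nil) M2'"
      using soup_bisimD(4)[OF S a(1) _ in1] by auto
    then obtain y' R' where "Inp a y' R' \<in># M2a" unfolding soup_trans.simps by blast
    then show ?thesis using a BIn soup_tau_star_frame_left[OF M2(1)]
      by (intro exI[of _ "K + M2a"]) (auto simp: soup_barb_def)
  qed
next
  case (BOut a)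
  with assms(3) obtain X where a: "a \<notin> H" "Out a X \<in># K + M1" by (auto simp: soup_barb_def)
  with soup_bisimD(2)[OF S] have "Out a X \<in># K" unfolding internal_soup_def by auto
  then show ?thesis using a BOut by (intro exI[of _ "K + M2"]) (auto simp: soup_barb_def)
qed

lemma soup_bisim_tau:
  assumes S: "soup_bisim H S" "S M1 M2" and K: "context_soup H K" and "soup_tau (K + M1) N"
  shows "\<exists>K' M1' M2'. N = K' + M1' \<and> soup_tau\<^sup>*\<^sup>* (K + M2) (K' + M2') \<and> context_soup H K' \<and> S M1' M2'"
  using assms(4)[unfolded soup_tau_def]
proof (cases rule: soup_trans_plus_cases)
  case (left K')
  then have "soup_tau\<^sup>*\<^sup>* (K + M2) (K' + M2)"
    using soup_trans_frame unfolding soup_tau_def by (metis r_into_rtranclp)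
  moreover have "context_soup H K'" using context_soup_tau[OF K] left(1) unfolding soup_tau_def .
  ultimately show ?thesis using left(2) S(2) by blast
next
  case (right M1')
  then obtain M2' where "soup_tau\<^sup>*\<^sup>* M2 M2'" "S M1' M2'"
    using soup_bisimD(3)[OF S] unfolding soup_tau_def by blast
  then show ?thesis using right K soup_tau_star_frame_left by blast
next
  case (comm_left a X K' M1')
  then have "context_soup H K'" "a \<notin> H" "fv X = {}" using context_soup_out K by blast+
  then obtain M2a M2' where M2: "soup_tau\<^sup>*\<^sup>* M2 M2a" "soup_trans M2a (LIn a X) M2'" "S M1' M2'"
    using soup_bisimD(4)[OF S] comm_left(3) by blast
  have "soup_tau\<^sup>*\<^sup>* (K + M2) (K + M2a)" using soup_tau_star_frame_left[OF M2(1)] .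
  moreover have "soup_tau (K + M2a) (K' + M2')"
    using soup_trans_comm[OF comm_left(2) M2(2)] unfolding soup_tau_def .
  ultimately have "soup_tau\<^sup>*\<^sup>* (K + M2) (K' + M2')" by (rule rtranclp.rtrancl_into_rtrancl)
  then show ?thesis using comm_left(4) \<open>context_soup H K'\<close> M2(3) by blast
next
  case (comm_right a X K' M1')
  have "a \<in> H" using soup_bisimD(2)[OF S] comm_right(3)
    unfolding internal_soup_def soup_trans.simps by auto
  moreover obtain y Q where "Inp a y Q \<in># K" using comm_right(2) unfolding soup_trans.simps by blast
  ultimately show ?thesis using K unfolding context_soup_def by auto
qed

lemma barbed_bisim_in_context:
  assumes S: "soup_bisim H S"
  shows "barbed_bisim H (in_context H S)"
  unfolding barbed_bisim_def
proof (intro conjI allI impI)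
  show "symp (in_context H S)"
    unfolding in_context_def by (blast intro: sympI soup_bisimD(1)[OF S])
next
  fix P Q assume "in_context H S P Q"
  then obtain K M1 M2 where PQ: "comps P = K + M1" "comps Q = K + M2" "context_soup H K" "S M1 M2"
    unfolding in_context_def by blast
  show "weak_barb H Q \<mu>" if "has_barb H P \<mu>" for \<mu>
  proof -
    have "soup_barb H (K + M1) \<mu>" using that PQ(1) by (simp add: has_barb_iff_soup_barb)
    then obtain N where "soup_tau\<^sup>*\<^sup>* (K + M2) N" "soup_barb H N \<mu>"
      using soup_bisim_barb[OF S PQ(4)] by blast
    then show ?thesis unfolding weak_barb_iff_soup PQ(2) by blast
  qed
  show "in_context H S (Par P R) (Par Q R)" if "fn R \<inter> H = {} \<and> fv R = {}" for R
    unfolding in_context_def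
    using PQ context_soup_plus[OF PQ(3) context_soup_comps[of R H]] that
    by (intro exI[of _ "K + comps R"] exI[of _ M1] exI[of _ M2]) (auto simp: ac_simps)
  show "\<exists>Q'. tau_star Q Q' \<and> in_context H S P' Q'" if "ptrans P LTau P'" for P'
  proof -
    have "soup_tau (K + M1) (comps P')"
      using ptrans_soup_trans[OF that] PQ(1) unfolding soup_tau_def by simp
    then obtain K' M1' M2' where P': "comps P' = K' + M1'" and Q: "soup_tau\<^sup>*\<^sup>* (K + M2) (K' + M2')"
      and "context_soup H K'" "S M1' M2'"
      using soup_bisim_tau[OF S PQ(4) PQ(3)] by blast
    moreover obtain Q' where "tau_star Q Q'" "comps Q' = K' + M2'"
      using soup_tau_star_tau_star Q PQ(2) by metis
    ultimately show ?thesis unfolding in_context_def by blast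
  qed
qed

lemma soup_bisim_barbed_equiv:
  assumes "soup_bisim H S" "S (comps P) (comps Q)"
  shows "barbed_equiv H P Q"
proof -
  have "in_context H S P Q"
    using assms(2) unfolding in_context_def context_soup_def
    by (intro exI[of _ "{#}"] exI[of _ "comps P"] exI[of _ "comps Q"]) simp
  then show ?thesis using barbed_bisim_in_context[OF assms(1)] unfolding barbed_equiv_def by blast
qed

lemma barbed_bisim_barbed_equiv: "barbed_bisim H (barbed_equiv H)"
  unfolding barbed_bisim_def
proof (intro conjI allI impI)
  show "symp (barbed_equiv H)"
  proof (rule sympI)
    fix P Q assume "barbed_equiv H P Q"
    then obtain R where "barbed_bisim H R" "R P Q" unfolding barbed_equiv_def by blast
    moreover from this have "R Q P" unfolding barbed_bisim_def by (blast dest: sympD)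
    ultimately show "barbed_equiv H Q P" unfolding barbed_equiv_def by blast
  qed
next
  fix P Q assume "barbed_equiv H P Q"
  then obtain R where R: "barbed_bisim H R" "R P Q" unfolding barbed_equiv_def by blast
  then have R': "(\<forall>\<mu>. has_barb H P \<mu> \<longrightarrow> weak_barb H Q \<mu>) \<and>
      (\<forall>R'. fn R' \<inter> H = {} \<and> fv R' = {} \<longrightarrow> R (Par P R') (Par Q R')) \<and>
      (\<forall>P'. ptrans P LTau P' \<longrightarrow> (\<exists>Q'. tau_star Q Q' \<and> R P' Q'))"
    unfolding barbed_bisim_def by blast
  show "has_barb H P \<mu> \<Longrightarrow> weak_barb H Q \<mu>" for \<mu>
    using R' by blast
  show "fn R' \<inter> H = {} \<and> fv R' = {} \<Longrightarrow> barbed_equiv H (Par P R') (Par Q R')" for R'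
    using R' R(1) unfolding barbed_equiv_def by blast
  show "ptrans P LTau P' \<Longrightarrow> \<exists>Q'. tau_star Q Q' \<and> barbed_equiv H P' Q'" for P'
    using R' R(1) unfolding barbed_equiv_def by blast
qed

lemma barbed_equiv_sym: "barbed_equiv H P Q \<Longrightarrow> barbed_equiv H Q P"
  using barbed_bisim_barbed_equiv unfolding barbed_bisim_def by (blast dest: sympD)

lemma barbed_equiv_barb: "barbed_equiv H P Q \<Longrightarrow> has_barb H P \<mu> \<Longrightarrow> weak_barb H Q \<mu>"
  using barbed_bisim_barbed_equiv unfolding barbed_bisim_def by blast

lemma barbed_equiv_par:
  "barbed_equiv H P Q \<Longrightarrow> fn R \<inter> H = {} \<Longrightarrow> fv R = {} \<Longrightarrow> barbed_equiv H (Par P R) (Par Q R)"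
  using barbed_bisim_barbed_equiv unfolding barbed_bisim_def by blast

lemma barbed_equiv_tau:
  "barbed_equiv H P Q \<Longrightarrow> ptrans P LTau P' \<Longrightarrow> \<exists>Q'. tau_star Q Q' \<and> barbed_equiv H P' Q'"
  using barbed_bisim_barbed_equiv unfolding barbed_bisim_def by blast

lemma barbed_equiv_tau_star:
  "tau_star P P' \<Longrightarrow> barbed_equiv H P Q \<Longrightarrow> \<exists>Q'. tau_star Q Q' \<and> barbed_equiv H P' Q'"
  unfolding tau_star_def
proof (induction rule: rtranclp_induct)
  case (step P1 P2)
  then obtain Q1 where "(\<lambda>P Q. ptrans P LTau Q)\<^sup>*\<^sup>* Q Q1" "barbed_equiv H P1 Q1" by blast
  with barbed_equiv_tau[OF this(2) step(2)] show ?case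
    unfolding tau_star_def by (meson rtranclp_trans)
qed auto

lemma barbed_equiv_weak_barb: "barbed_equiv H P Q \<Longrightarrow> weak_barb H P \<mu> \<Longrightarrow> weak_barb H Q \<mu>"
proof -
  assume PQ: "barbed_equiv H P Q" and "weak_barb H P \<mu>"
  then obtain P' where "tau_star P P'" "has_barb H P' \<mu>" unfolding weak_barb_def by blast
  moreover obtain Q' where "tau_star Q Q'" "barbed_equiv H P' Q'"
    using barbed_equiv_tau_star[OF calculation(1) PQ] by blast
  ultimately obtain Q'' where "tau_star Q Q'" "tau_star Q' Q''" "has_barb H Q'' \<mu>"
    using barbed_equiv_barb unfolding weak_barb_def by blast
  then show ?thesis unfolding weak_barb_def tau_star_def by (meson rtranclp_trans)
qed

section \<open>The NFB machine\<close>

definition weak_mstep :: "conf \<Rightarrow> flag \<Rightarrow> conf \<Rightarrow> bool" where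
  "weak_mstep C F C' = (\<exists>D. mtau\<^sup>*\<^sup>* C D \<and> mstep D F C')"

definition weak_mterm :: "conf \<Rightarrow> flag \<Rightarrow> bool" where
  "weak_mterm C F = (\<exists>D. mtau\<^sup>*\<^sup>* C D \<and> mterm D F)"

lemma weak_mstepI: "mtau\<^sup>*\<^sup>* C D \<Longrightarrow> mstep D F C' \<Longrightarrow> weak_mstep C F C'"
  unfolding weak_mstep_def by blast

lemma mtau_deterministic: "mtau C C1 \<Longrightarrow> mtau C C2 \<Longrightarrow> C1 = C2"
  by (auto elim!: mtau.cases)

lemma mtau_star_from_final: "mtau\<^sup>*\<^sup>* C C' \<Longrightarrow> (\<And>D. \<not> mtau C D) \<Longrightarrow> C' = C"
  by (induction rule: converse_rtranclp_induct) auto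

lemma mtau_star_linear: "mtau\<^sup>*\<^sup>* C D1 \<Longrightarrow> mtau\<^sup>*\<^sup>* C D2 \<Longrightarrow> mtau\<^sup>*\<^sup>* D1 D2 \<or> mtau\<^sup>*\<^sup>* D2 D1"
proof (induction arbitrary: D2 rule: converse_rtranclp_induct)
  case (step C C1)
  from step.prems show ?case
  proof (cases rule: converse_rtranclpE)
    case base
    then show ?thesis using step.hyps by (meson converse_rtranclp_into_rtranclp)
  next
    case (step C2)
    with \<open>mtau C C1\<close> have "C2 = C1" using mtau_deterministic by blast
    with step show ?thesis using \<open>\<And>D2. mtau\<^sup>*\<^sup>* C1 D2 \<Longrightarrow> _\<close> by blast
  qed
qed auto

lemma mtau_star_to_final:
  "mtau\<^sup>*\<^sup>* C D \<Longrightarrow> mtau\<^sup>*\<^sup>* C D' \<Longrightarrow> (\<And>X. \<not> mtau D X) \<Longrightarrow> mtau\<^sup>*\<^sup>* D' D"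
  using mtau_star_linear mtau_star_from_final by metis

lemma mtau_star_Ev_FV: "mtau\<^sup>*\<^sup>* (Ev (FV g) \<pi> n) D \<Longrightarrow> D = Ev (FV g) \<pi> n"
  by (rule mtau_star_from_final) (auto elim: mtau.cases)

lemma mtau_star_Co: "mtau\<^sup>*\<^sup>* (Co \<pi> n) D \<Longrightarrow> D = Co \<pi> n"
  by (rule mtau_star_from_final) (auto elim: mtau.cases)

lemma mtau_star_Ev: "mtau\<^sup>*\<^sup>* (Ev t \<pi> n) D \<Longrightarrow> \<exists>t' \<pi>'. D = Ev t' \<pi>' n"
  by (induction rule: rtranclp_induct) (auto elim: mtau.cases)

lemma mach_bisimilarD:
  assumes "mach_bisimilar C1 C2"
  shows "mach_bisimilar C2 C1"
    and "weak_mstep C1 F C1' \<Longrightarrow> \<exists>C2'. weak_mstep C2 F C2' \<and> mach_bisimilar C1' C2'"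
    and "weak_mterm C1 F \<Longrightarrow> weak_mterm C2 F"
proof -
  obtain R where R: "mach_bisim R" "R C1 C2" using assms unfolding mach_bisimilar_def by blast
  then have "symp R" unfolding mach_bisim_def by blast
  with R show "mach_bisimilar C2 C1" unfolding mach_bisimilar_def by (blast dest: sympD)
  from R have "\<forall>F. (\<forall>C1'. (\<exists>D. mtau\<^sup>*\<^sup>* C1 D \<and> mstep D F C1') \<longrightarrow>
          (\<exists>C2'. (\<exists>D. mtau\<^sup>*\<^sup>* C2 D \<and> mstep D F C2') \<and> R C1' C2')) \<and>
      ((\<exists>D. mtau\<^sup>*\<^sup>* C1 D \<and> mterm D F) \<longrightarrow> (\<exists>D. mtau\<^sup>*\<^sup>* C2 D \<and> mterm D F))"
    unfolding mach_bisim_def by blast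
  with R(1) show "weak_mstep C1 F C1' \<Longrightarrow> \<exists>C2'. weak_mstep C2 F C2' \<and> mach_bisimilar C1' C2'"
    and "weak_mterm C1 F \<Longrightarrow> weak_mterm C2 F"
    unfolding weak_mstep_def weak_mterm_def mach_bisimilar_def by blast+
qed

lemma mach_bisimilarI:
  assumes "symp R"
    and "\<And>C1 C2 F C1'. R C1 C2 \<Longrightarrow> weak_mstep C1 F C1' \<Longrightarrow> \<exists>C2'. weak_mstep C2 F C2' \<and> R C1' C2'"
    and "\<And>C1 C2 F. R C1 C2 \<Longrightarrow> weak_mterm C1 F \<Longrightarrow> weak_mterm C2 F"
    and "R C C'"
  shows "mach_bisimilar C C'"
  using assms unfolding mach_bisimilar_def mach_bisim_def weak_mstep_def weak_mterm_def by blast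

text \<open>The encoding of a free variable emits its flag in unary, one input at a time, so the
  intermediate states must be related as well.\<close>

lemma mach_bisimilar_Ev_FV:
  assumes "mach_bisimilar (Co \<pi>1 n1) (Co \<pi>2 n2)"
  shows "mach_bisimilar (Ev (FV g) \<pi>1 n1) (Ev (FV g) \<pi>2 n2)"
proof (rule mach_bisimilarI)
  let ?R = "\<lambda>X Y. (\<exists>g \<pi>1 n1 \<pi>2 n2. X = Ev (FV g) \<pi>1 n1 \<and> Y = Ev (FV g) \<pi>2 n2 \<and>
      mach_bisimilar (Co \<pi>1 n1) (Co \<pi>2 n2)) \<or> mach_bisimilar X Y"
  show "symp ?R" unfolding symp_def using mach_bisimilarD(1) by blast
  show "?R (Ev (FV g) \<pi>1 n1) (Ev (FV g) \<pi>2 n2)" using assms by blast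
  show "\<exists>C2'. weak_mstep C2 F C2' \<and> ?R C1' C2'" if "?R C1 C2" "weak_mstep C1 F C1'" for C1 C2 F C1'
    using that(1)
  proof
    assume "\<exists>g \<pi>1 n1 \<pi>2 n2. C1 = Ev (FV g) \<pi>1 n1 \<and> C2 = Ev (FV g) \<pi>2 n2 \<and>
      mach_bisimilar (Co \<pi>1 n1) (Co \<pi>2 n2)"
    then obtain g \<pi>1 n1 \<pi>2 n2 where C: "C1 = Ev (FV g) \<pi>1 n1" "C2 = Ev (FV g) \<pi>2 n2"
      "mach_bisimilar (Co \<pi>1 n1) (Co \<pi>2 n2)" by blast
    from that(2) have "mstep (Ev (FV g) \<pi>1 n1) F C1'"
      unfolding weak_mstep_def C(1) using mtau_star_Ev_FV by blast
    then have "F = FFree g" "C1' = Co \<pi>1 n1" by (auto elim: mstep.cases)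
    moreover have "weak_mstep C2 (FFree g) (Co \<pi>2 n2)"
      unfolding C(2) by (blast intro: weak_mstepI mstep.intros)
    ultimately show ?thesis using C(3) by blast
  qed (use mach_bisimilarD(2) that(2) in blast)
  show "weak_mterm C2 F" if "?R C1 C2" "weak_mterm C1 F" for C1 C2 F
    using that mtau_star_Ev_FV mach_bisimilarD(3) unfolding weak_mterm_def
    by (blast elim: mterm.cases)
qed

lemma bvs_free_tsubst: "bvs_free (tsubst t x s) \<subseteq> (bvs_free t - {x}) \<union> bvs_free s"
  by (induction t) auto

lemma wf_term_Lam: "wf_term (Lam x t) \<longleftrightarrow> bvs_free t \<subseteq> {x}"
  by (auto simp: wf_term_def)

lemma wf_term_FV [simp]: "wf_term (FV n)"
  by (simp add: wf_term_def)

lemma wf_term_tsubst: "bvs_free t \<subseteq> {x} \<Longrightarrow> wf_term s \<Longrightarrow> wf_term (tsubst t x s)"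
  using bvs_free_tsubst[of t x s] by (auto simp: wf_term_def)

lemma wf_conf_mtau: "wf_conf C \<Longrightarrow> mtau C C' \<Longrightarrow> wf_conf C'"
  by (auto elim!: mtau.cases simp: wf_conf_def wf_term_def wf_term_tsubst[unfolded wf_term_def])

lemma wf_conf_mtau_star: "mtau\<^sup>*\<^sup>* C C' \<Longrightarrow> wf_conf C \<Longrightarrow> wf_conf C'"
  by (induction rule: rtranclp_induct) (auto intro: wf_conf_mtau)

section \<open>Administrative reductions of the encoding\<close>

lemma psubst_nonfree: "x \<notin> fv Q \<Longrightarrow> psubst Q x P = Q"
  by (induction Q) auto

lemma psubst_closed [simp]: "fv Q = {} \<Longrightarrow> psubst Q x P = Q"
  by (simp add: psubst_nonfree)

lemma fv_num [simp]: "fv (num n) = {}"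
  by (induction n) auto

lemma comps_num [simp]: "comps (num n) = {#num n#}"
  by (cases n) auto

lemma comps_trm [simp]: "comps (trm t) = {#trm t#}"
  by (cases t) auto

definition restart_body :: proc where
  "restart_body = Inp NK VX (Par (Out NHd (Var VX)) (Par (Out NK (Inp NSuc VU (Var VX)))
     (Par (Out NC stk_nil) (Out NB Nil))))"

definition lam_body :: "nat \<Rightarrow> lterm \<Rightarrow> proc" where
  "lam_body x t = Inp NHd (LV x) (Inp NB VU (trm t))"

definition rec_body :: proc where
  "rec_body = Inp NRec VX (Par (Var VX) (Par (Out NRec (Var VX)) ContP))"

definition done_proc :: proc where
  "done_proc = Inp NDone VU Nil"

definition cont_body :: proc where
  "cont_body = Inp NHd VX (Inp NB VU (Choice (Var VX)))"

definition enter_branch :: "lterm \<Rightarrow> proc" where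
  "enter_branch t = Inp NEnter VU (Inp NC VU (Par (trm t) (Out NC stk_nil)))"

definition skip_branch :: proc where
  "skip_branch = Inp NSkip VU (Out NInit Nil)"

definition choice_recv :: proc where
  "choice_recv = Inp NCh VY (Inp NCh VU (Var VY))"

lemma Restart_eq: "Restart = Inp NLam VU restart_body"
  unfolding Restart_def restart_body_def ..

lemma RecP_eq: "RecP = Inp NInit VU rec_body"
  unfolding RecP_def rec_body_def ..

lemma ContP_eq: "ContP = Inp NC VP (Par (Var VP) (Par (Out NB done_proc) cont_body))"
  unfolding ContP_def done_proc_def cont_body_def ..

lemma Choice_eq: "Choice P =
    Par (Out NCh (Inp NEnter VU (Inp NC VU (Par P (Out NC stk_nil))))) (Par (Out NCh skip_branch) choice_recv)"
  unfolding Choice_def plus_def skip_branch_def choice_recv_def ..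

lemma fv_trm: "fv (trm t) = LV ` bvs_free t"
  by (induction t) (auto simp: Restart_eq restart_body_def stk_nil_def)

lemma fv_trm_wf [simp]: "wf_term t \<Longrightarrow> fv (trm t) = {}"
  by (simp add: fv_trm wf_term_def)

lemma psubst_trm_nonLV [simp]: "(\<And>x. y \<noteq> LV x) \<Longrightarrow> psubst (trm t) y P = trm t"
  by (induction t) (auto simp: Restart_eq restart_body_def stk_nil_def)

lemma psubst_trm: "psubst (trm t) (LV x) (trm s) = trm (tsubst t x s)"
  by (induction t) (auto simp: Restart_eq restart_body_def stk_nil_def)

lemma psubst_trm_num: "psubst (trm t) (LV x) (num n) = trm (tsubst t x (FV n))"
  using psubst_trm[of t x "FV n"] by simp

definition runtime :: "nat \<Rightarrow> proc multiset" where
  "runtime n = {#Out NK (num n), RecP, Out NRec RecP#}"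

definition enter_chosen :: "lterm \<Rightarrow> lterm list \<Rightarrow> nat \<Rightarrow> proc multiset" where
  "enter_chosen t \<pi> n = {#Out NCh skip_branch, Inp NCh VU (enter_branch t), Out NC (stk \<pi>)#} + runtime n"

definition enter_ready :: "lterm \<Rightarrow> lterm list \<Rightarrow> nat \<Rightarrow> proc multiset" where
  "enter_ready t \<pi> n = {#enter_branch t, Out NC (stk \<pi>)#} + runtime n"

definition skip_chosen :: "lterm \<Rightarrow> lterm list \<Rightarrow> nat \<Rightarrow> proc multiset" where
  "skip_chosen t \<pi> n = {#Out NCh (enter_branch t), Inp NCh VU skip_branch, Out NC (stk \<pi>)#} + runtime n"

definition skip_ready :: "lterm list \<Rightarrow> nat \<Rightarrow> proc multiset" where
  "skip_ready \<pi> n = {#skip_branch, Out NC (stk \<pi>)#} + runtime n"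

definition halted :: "nat \<Rightarrow> proc multiset" where
  "halted n = {#cont_body#} + runtime n"

text \<open>The following simplification rules describe the named components only through their
  input behaviour, so that the simplifier computes the transitions of a soup (via soup_tau_iff
  and soup_in_iff) without unfolding them; the successor soups then appear in exactly the
  folded form used by the rules of admin below.\<close>

lemma trm_Lam: "trm (Lam x t) = Inp NC VP (Par (Var VP) (Par (Out NB Restart) (lam_body x t)))"
  by (simp add: lam_body_def)

declare trm.simps(2) [simp del] trm_Lam [simp]

lemma comps_components [simp]:
  "comps RecP = {#RecP#}" "comps rec_body = {#rec_body#}" "comps ContP = {#ContP#}"
  "comps cont_body = {#cont_body#}" "comps done_proc = {#done_proc#}" "comps Restart = {#Restart#}"
  "comps restart_body = {#restart_body#}" "comps (lam_body x t) = {#lam_body x t#}"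
  "comps stk_nil = {#stk_nil#}" "comps (enter_branch t) = {#enter_branch t#}"
  "comps skip_branch = {#skip_branch#}" "comps choice_recv = {#choice_recv#}"
  by (simp_all add: RecP_eq rec_body_def ContP_eq cont_body_def done_proc_def Restart_eq
      restart_body_def lam_body_def stk_nil_def enter_branch_def skip_branch_def choice_recv_def)

lemma comps_Choice [simp]:
  "comps (Choice (trm t)) = {#Out NCh (enter_branch t), Out NCh skip_branch, choice_recv#}"
  by (simp add: Choice_eq enter_branch_def skip_branch_def choice_recv_def)

lemma fv_components [simp]:
  "fv RecP = {}" "fv rec_body = {}" "fv ContP = {}" "fv cont_body = {}" "fv done_proc = {}"
  "fv Restart = {}" "fv restart_body = {}" "fv stk_nil = {}" "fv skip_branch = {}" "fv choice_recv = {}"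
  by (simp_all add: RecP_eq rec_body_def ContP_eq cont_body_def done_proc_def Restart_eq
      restart_body_def stk_nil_def skip_branch_def choice_recv_def Choice_eq)

lemma fv_Choice [simp]: "fv (Choice P) = fv P - {VU}"
  by (auto simp: Choice_eq skip_branch_def choice_recv_def)

lemma psubst_lam_body [simp]: "(\<And>z. y \<noteq> LV z) \<Longrightarrow> psubst (lam_body x t) y P = lam_body x t"
  by (simp add: lam_body_def)

lemma psubst_VU_components [simp]:
  "psubst (enter_branch t) VU X = enter_branch t" "psubst (Choice P) VU X = Choice P"
  by (simp_all add: enter_branch_def Choice_eq skip_branch_def choice_recv_def)

lemma receive_num_other [simp]: "a \<noteq> NZ \<Longrightarrow> a \<noteq> NSuc \<Longrightarrow> receive (num f) a X = None"
  by (cases f) auto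

lemma components_not_Out [simp]:
  "RecP \<noteq> Out a X" "rec_body \<noteq> Out a X" "ContP \<noteq> Out a X" "cont_body \<noteq> Out a X"
  "done_proc \<noteq> Out a X" "Restart \<noteq> Out a X" "restart_body \<noteq> Out a X" "lam_body x t \<noteq> Out a X"
  "stk_nil \<noteq> Out a X" "enter_branch t \<noteq> Out a X" "skip_branch \<noteq> Out a X"
  "choice_recv \<noteq> Out a X" "num n \<noteq> Out a X"
  by (simp_all add: RecP_eq rec_body_def ContP_eq cont_body_def done_proc_def Restart_eq
      restart_body_def lam_body_def stk_nil_def enter_branch_def skip_branch_def choice_recv_def)
    (cases n; simp)

lemma react_components [simp]:
  "react RecP q = None" "react rec_body q = None" "react ContP q = None" "react cont_body q = None"
  "react done_proc q = None" "react Restart q = None" "react restart_body q = None"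
  "react (lam_body x t) q = None" "react stk_nil q = None" "react (enter_branch t) q = None"
  "react skip_branch q = None" "react choice_recv q = None" "react (num n) q = None"
  by (simp_all add: RecP_eq rec_body_def ContP_eq cont_body_def done_proc_def Restart_eq
      restart_body_def lam_body_def stk_nil_def enter_branch_def skip_branch_def choice_recv_def)
    (cases n; simp)

lemma receive_components [simp]:
  "receive RecP a X = (if a = NInit then Some {#rec_body#} else None)"
  "receive rec_body a X = (if a = NRec then Some (comps X + {#Out NRec X, ContP#}) else None)"
  "receive ContP a X = (if a = NC then Some (comps X + {#Out NB done_proc, cont_body#}) else None)"
  "receive cont_body a X = (if a = NHd then Some {#Inp NB VU (Choice X)#} else None)"
  "receive done_proc a X = (if a = NDone then Some {#} else None)"
  "receive Restart a X = (if a = NLam then Some {#restart_body#} else None)"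
  "receive restart_body a X = (if a = NK then
     Some {#Out NHd X, Out NK (Inp NSuc VU X), Out NC stk_nil, Out NB Nil#} else None)"
  "receive (lam_body x t) a X = (if a = NHd then Some {#Inp NB VU (psubst (trm t) (LV x) X)#} else None)"
  "receive stk_nil a X = (if a = NB then Some (comps X) else None)"
  "receive (enter_branch t) a X =
     (if a = NEnter then Some {#Inp NC VU (Par (trm t) (Out NC stk_nil))#} else None)"
  "receive skip_branch a X = (if a = NSkip then Some {#Out NInit Nil#} else None)"
  "receive choice_recv a X = (if a = NCh then Some {#Inp NCh VU X#} else None)"
  "receive (num 0) a X = (if a = NZ then Some {#Out NInit Nil#} else None)"
  "receive (num (Suc m)) a X = (if a = NSuc then Some {#num m#} else None)"
  by (auto simp: RecP_eq rec_body_def ContP_eq cont_body_def done_proc_def Restart_eq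
      restart_body_def lam_body_def stk_nil_def enter_branch_def skip_branch_def choice_recv_def
      Choice_eq add_mset_commute)

lemmas enc_simps = runtime_def enter_chosen_def enter_ready_def skip_chosen_def skip_ready_def
  halted_def psubst_trm psubst_trm_num

text \<open>admin M C: M is one of the soups through which the encoding passes between reaching the
  configuration C and performing the next machine step of C.\<close>

inductive admin :: "proc multiset \<Rightarrow> conf \<Rightarrow> bool" where
  admin_app: "admin ({#trm (App t s), Out NC (stk \<pi>)#} + runtime n) (Ev (App t s) \<pi> n)"
| admin_lam: "admin ({#trm (Lam x t), Out NC (stk \<pi>)#} + runtime n) (Ev (Lam x t) \<pi> n)"
| admin_lam_pop: "admin ({#Out NHd (trm s), Out NC (stk \<pi>), Out NB Restart, lam_body x t#} + runtime n)
    (Ev (Lam x t) (s # \<pi>) n)"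
| admin_lam_arg: "admin ({#Out NC (stk \<pi>), Out NB Restart, Inp NB VU (trm (tsubst t x s))#} + runtime n)
    (Ev (Lam x t) (s # \<pi>) n)"
| admin_lam_empty: "admin ({#stk_nil, Out NB Restart, lam_body x t#} + runtime n) (Ev (Lam x t) [] n)"
| admin_lam_ready: "admin ({#Restart, lam_body x t#} + runtime n) (Ev (Lam x t) [] n)"
| admin_restart: "bvs_free t \<subseteq> {x} \<Longrightarrow>
    admin ({#restart_body, lam_body x t#} + runtime n) (Ev (tsubst t x (FV n)) [] (Suc n))"
| admin_restart_hd: "bvs_free t \<subseteq> {x} \<Longrightarrow>
    admin ({#Out NHd (num n), Out NC stk_nil, Out NB Nil, lam_body x t#} + runtime (Suc n))
      (Ev (tsubst t x (FV n)) [] (Suc n))"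
| admin_restart_b: "bvs_free t \<subseteq> {x} \<Longrightarrow>
    admin ({#Out NC stk_nil, Out NB Nil, Inp NB VU (trm (tsubst t x (FV n)))#} + runtime (Suc n))
      (Ev (tsubst t x (FV n)) [] (Suc n))"
| admin_fv: "admin ({#num f, Out NC (stk \<pi>)#} + runtime n) (Ev (FV f) \<pi> n)"
| admin_enter: "\<forall>s\<in>set \<pi>. wf_term s \<Longrightarrow>
    admin ({#Inp NC VU (Par (trm t) (Out NC stk_nil)), Out NC (stk \<pi>)#} + runtime n) (Ev t [] n)"
| admin_init: "admin ({#Out NInit Nil, Out NC (stk \<pi>)#} + runtime n) (Co \<pi> n)"
| admin_rec: "admin ({#rec_body, Out NRec RecP, Out NC (stk \<pi>), Out NK (num n)#}) (Co \<pi> n)"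
| admin_cont: "admin ({#Out NC (stk \<pi>), ContP#} + runtime n) (Co \<pi> n)"
| admin_cont_empty: "admin ({#stk_nil, Out NB done_proc, cont_body#} + runtime n) (Co [] n)"
| admin_done_ready: "admin ({#done_proc, cont_body#} + runtime n) (Co [] n)"
| admin_cont_pop: "admin ({#Out NHd (trm t), Out NC (stk \<pi>), Out NB done_proc, cont_body#} + runtime n)
    (Co (t # \<pi>) n)"
| admin_cont_arg: "admin ({#Out NC (stk \<pi>), Out NB done_proc, Inp NB VU (Choice (trm t))#} + runtime n)
    (Co (t # \<pi>) n)"
| admin_choice: "admin ({#Out NCh (enter_branch t), Out NCh skip_branch, choice_recv, Out NC (stk \<pi>)#}
    + runtime n) (Co (t # \<pi>) n)"

lemma admin_trm:
  assumes "wf_term t"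
  shows "admin ({#trm t, Out NC (stk \<pi>)#} + runtime n) (Ev t \<pi> n)"
proof (cases t)
  case (BV x)
  with assms show ?thesis by (simp add: wf_term_def)
next
  case (FV f)
  then show ?thesis using admin_fv[of f \<pi> n] by simp
next
  case (Lam x u)
  then show ?thesis using admin_lam[of x u \<pi> n] by simp
next
  case (App u v)
  then show ?thesis using admin_app[of u v \<pi> n] by simp
qed

lemma wf_conf_Ev: "wf_conf (Ev t \<pi> n) \<longleftrightarrow> wf_term t \<and> (\<forall>s\<in>set \<pi>. wf_term s)"
  by (simp add: wf_conf_def)

lemma wf_conf_Co: "wf_conf (Co \<pi> n) \<longleftrightarrow> (\<forall>s\<in>set \<pi>. wf_term s)"
  by (simp add: wf_conf_def)

lemma admin_tau_steps:
  shows tau_app: "soup_tau ({#trm (App t s), Out NC (stk \<pi>)#} + runtime n) M' \<longleftrightarrow>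
      M' = {#trm t, Out NC (stk (s # \<pi>))#} + runtime n"
    and tau_lam_cons: "soup_tau ({#trm (Lam x t), Out NC (stk (s # \<pi>))#} + runtime n) M' \<longleftrightarrow>
      M' = {#Out NHd (trm s), Out NC (stk \<pi>), Out NB Restart, lam_body x t#} + runtime n"
    and tau_lam_nil: "soup_tau ({#trm (Lam x t), Out NC (stk [])#} + runtime n) M' \<longleftrightarrow>
      M' = {#stk_nil, Out NB Restart, lam_body x t#} + runtime n"
    and tau_lam_pop: "soup_tau ({#Out NHd (trm s), Out NC (stk \<pi>), Out NB Restart, lam_body x t#} + runtime n) M' \<longleftrightarrow>
      M' = {#Out NC (stk \<pi>), Out NB Restart, Inp NB VU (trm (tsubst t x s))#} + runtime n"
    and tau_lam_arg: "soup_tau ({#Out NC (stk \<pi>), Out NB Restart, Inp NB VU (trm t)#} + runtime n) M' \<longleftrightarrow>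
      M' = {#trm t, Out NC (stk \<pi>)#} + runtime n"
    and tau_lam_empty: "soup_tau ({#stk_nil, Out NB Restart, lam_body x t#} + runtime n) M' \<longleftrightarrow>
      M' = {#Restart, lam_body x t#} + runtime n"
    and tau_lam_ready: "\<not> soup_tau ({#Restart, lam_body x t#} + runtime n) M'"
    and tau_restart: "soup_tau ({#restart_body, lam_body x t#} + runtime n) M' \<longleftrightarrow>
      M' = {#Out NHd (num n), Out NC stk_nil, Out NB Nil, lam_body x t#} + runtime (Suc n)"
    and tau_restart_hd: "soup_tau ({#Out NHd (num n), Out NC stk_nil, Out NB Nil, lam_body x t#} + runtime m) M' \<longleftrightarrow>
      M' = {#Out NC stk_nil, Out NB Nil, Inp NB VU (trm (tsubst t x (FV n)))#} + runtime m"
    and tau_restart_b: "soup_tau ({#Out NC stk_nil, Out NB Nil, Inp NB VU (trm t)#} + runtime n) M' \<longleftrightarrow>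
      M' = {#trm t, Out NC (stk [])#} + runtime n"
    and tau_fv: "\<not> soup_tau ({#num f, Out NC (stk \<pi>)#} + runtime n) M'"
    and tau_enter: "soup_tau ({#Inp NC VU (Par (trm t) (Out NC stk_nil)), Out NC (stk \<pi>)#} + runtime n) M' \<longleftrightarrow>
      M' = {#trm t, Out NC (stk [])#} + runtime n"
    and tau_init: "soup_tau ({#Out NInit Nil, Out NC (stk \<pi>)#} + runtime n) M' \<longleftrightarrow>
      M' = {#rec_body, Out NRec RecP, Out NC (stk \<pi>), Out NK (num n)#}"
    and tau_rec: "soup_tau {#rec_body, Out NRec RecP, Out NC (stk \<pi>), Out NK (num n)#} M' \<longleftrightarrow>
      M' = {#Out NC (stk \<pi>), ContP#} + runtime n"
    and tau_cont_nil: "soup_tau ({#Out NC (stk []), ContP#} + runtime n) M' \<longleftrightarrow>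
      M' = {#stk_nil, Out NB done_proc, cont_body#} + runtime n"
    and tau_cont_cons: "soup_tau ({#Out NC (stk (t # \<pi>)), ContP#} + runtime n) M' \<longleftrightarrow>
      M' = {#Out NHd (trm t), Out NC (stk \<pi>), Out NB done_proc, cont_body#} + runtime n"
    and tau_cont_empty: "soup_tau ({#stk_nil, Out NB done_proc, cont_body#} + runtime n) M' \<longleftrightarrow>
      M' = {#done_proc, cont_body#} + runtime n"
    and tau_done_ready: "\<not> soup_tau ({#done_proc, cont_body#} + runtime n) M'"
    and tau_cont_pop: "soup_tau ({#Out NHd (trm t), Out NC (stk \<pi>), Out NB done_proc, cont_body#} + runtime n) M' \<longleftrightarrow>
      M' = {#Out NC (stk \<pi>), Out NB done_proc, Inp NB VU (Choice (trm t))#} + runtime n"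
    and tau_cont_arg: "soup_tau ({#Out NC (stk \<pi>), Out NB done_proc, Inp NB VU (Choice (trm t))#} + runtime n) M' \<longleftrightarrow>
      M' = {#Out NCh (enter_branch t), Out NCh skip_branch, choice_recv, Out NC (stk \<pi>)#} + runtime n"
    and tau_choice: "soup_tau ({#Out NCh (enter_branch t), Out NCh skip_branch, choice_recv, Out NC (stk \<pi>)#}
        + runtime n) M' \<longleftrightarrow> M' = enter_chosen t \<pi> n \<or> M' = skip_chosen t \<pi> n"
    and tau_enter_chosen: "soup_tau (enter_chosen t \<pi> n) M' \<longleftrightarrow> M' = enter_ready t \<pi> n"
    and tau_enter_ready: "\<not> soup_tau (enter_ready t \<pi> n) M'"
    and tau_skip_chosen: "soup_tau (skip_chosen t \<pi> n) M' \<longleftrightarrow> M' = skip_ready \<pi> n"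
    and tau_skip_ready: "\<not> soup_tau (skip_ready \<pi> n) M'"
    and tau_halted: "\<not> soup_tau (halted n) M'"
  by (auto simp: soup_tau_iff enc_simps)

lemma admin_tau_Ev:
  assumes "admin M D" "wf_conf D" "soup_tau M M'" "D = Ev t0 \<pi>0 n0"
  shows "admin M' D \<or> (\<exists>D'. mtau D D' \<and> admin M' D')"
  using assms(1)
proof cases
  case (admin_app t s \<pi> n)
  moreover have "wf_term t" using assms(2) admin_app by (auto simp: wf_conf_Ev wf_term_def)
  ultimately show ?thesis
    using assms(3) admin_trm unfolding admin_app(1) tau_app by (blast intro: mtau.intros)
next
  case (admin_lam x t \<pi> n)
  then show ?thesis
    using assms(3) by (cases \<pi>) (auto simp only: tau_lam_nil tau_lam_cons intro: admin.intros)
next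
  case admin_lam_pop
  then show ?thesis using assms(3) unfolding admin_lam_pop(1) tau_lam_pop by (blast intro: admin.intros)
next
  case (admin_lam_arg \<pi> t x s n)
  moreover have "wf_term (tsubst t x s)"
    using assms(2) admin_lam_arg by (auto simp: wf_conf_Ev wf_term_Lam intro: wf_term_tsubst)
  ultimately show ?thesis
    using assms(3) admin_trm unfolding admin_lam_arg(1) tau_lam_arg by (blast intro: mtau.intros)
next
  case admin_lam_empty
  then show ?thesis using assms(3) unfolding admin_lam_empty(1) tau_lam_empty by (blast intro: admin.intros)
next
  case admin_lam_ready
  then show ?thesis using assms(3) tau_lam_ready unfolding admin_lam_ready(1) by blast
next
  case admin_restart
  then show ?thesis using assms(3) unfolding admin_restart(1) tau_restart by (blast intro: admin.intros)
next
  case admin_restart_hd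
  then show ?thesis
    using assms(3) unfolding admin_restart_hd(1) tau_restart_hd by (blast intro: admin.intros)
next
  case (admin_restart_b t x n)
  then show ?thesis
    using assms(3) admin_trm[of "tsubst t x (FV n)" "[]"] wf_term_tsubst
    unfolding admin_restart_b(1) tau_restart_b by simp
next
  case admin_fv
  then show ?thesis using assms(3) tau_fv unfolding admin_fv(1) by blast
next
  case (admin_enter \<pi> t n)
  then show ?thesis
    using assms(2,3) admin_trm[of t "[]"] unfolding admin_enter(1) tau_enter by (simp add: wf_conf_Ev)
qed (use assms(4) in simp_all)

lemma admin_tau_Co:
  assumes "admin M D" "D = Co \<pi>0 n0" "soup_tau M M'"
  shows "admin M' D \<or> (\<exists>t \<pi>. \<pi>0 = t # \<pi> \<and> (M' = enter_chosen t \<pi> n0 \<or> M' = skip_chosen t \<pi> n0))"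
  using assms(1)
proof cases
  case admin_init
  then show ?thesis using assms(3) unfolding admin_init(1) tau_init by (blast intro: admin.intros)
next
  case admin_rec
  then show ?thesis using assms(3) unfolding admin_rec(1) tau_rec by (blast intro: admin.intros)
next
  case (admin_cont \<pi> n)
  then show ?thesis
    using assms(3) by (cases \<pi>) (auto simp only: tau_cont_nil tau_cont_cons intro: admin.intros)
next
  case admin_cont_empty
  then show ?thesis
    using assms(3) unfolding admin_cont_empty(1) tau_cont_empty by (blast intro: admin.intros)
next
  case admin_done_ready
  then show ?thesis using assms(3) tau_done_ready unfolding admin_done_ready(1) by blast
next
  case admin_cont_pop
  then show ?thesis using assms(3) unfolding admin_cont_pop(1) tau_cont_pop by (blast intro: admin.intros)
next
  case admin_cont_arg
  then show ?thesis using assms(3) unfolding admin_cont_arg(1) tau_cont_arg by (blast intro: admin.intros)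
next
  case admin_choice
  then show ?thesis using assms(2,3) unfolding admin_choice(1) tau_choice by blast
qed (use assms(2) in simp_all)

lemma admin_tau:
  assumes "admin M D" "wf_conf D" "soup_tau M M'"
  shows "admin M' D \<or> (\<exists>D'. mtau D D' \<and> admin M' D') \<or>
    (\<exists>t \<pi> n. D = Co (t # \<pi>) n \<and> (M' = enter_chosen t \<pi> n \<or> M' = skip_chosen t \<pi> n))"
  using admin_tau_Ev[OF assms] admin_tau_Co[OF assms(1) _ assms(3)] by (cases D) auto

lemma flags_not_Hidden [simp]:
  "NLam \<notin> Hidden" "NEnter \<notin> Hidden" "NSkip \<notin> Hidden" "NDone \<notin> Hidden" "NSuc \<notin> Hidden" "NZ \<notin> Hidden"
  by (auto simp: Hidden_def)

lemma admin_input_steps: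
  assumes "a \<notin> Hidden"
  shows in_lam_ready: "soup_trans ({#Restart, lam_body x t#} + runtime n) (LIn a X) M' \<longleftrightarrow>
      a = NLam \<and> M' = {#restart_body, lam_body x t#} + runtime n"
    and in_fv_Suc: "soup_trans ({#num (Suc g), Out NC (stk \<pi>)#} + runtime n) (LIn a X) M' \<longleftrightarrow>
      a = NSuc \<and> M' = {#num g, Out NC (stk \<pi>)#} + runtime n"
    and in_fv_0: "soup_trans ({#num 0, Out NC (stk \<pi>)#} + runtime n) (LIn a X) M' \<longleftrightarrow>
      a = NZ \<and> M' = {#Out NInit Nil, Out NC (stk \<pi>)#} + runtime n"
    and in_done_ready: "soup_trans ({#done_proc, cont_body#} + runtime n) (LIn a X) M' \<longleftrightarrow>
      a = NDone \<and> M' = halted n"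
    and in_enter_ready: "soup_trans (enter_ready t \<pi> n) (LIn a X) M' \<longleftrightarrow>
      a = NEnter \<and> M' = {#Inp NC VU (Par (trm t) (Out NC stk_nil)), Out NC (stk \<pi>)#} + runtime n"
    and in_skip_ready: "soup_trans (skip_ready \<pi> n) (LIn a X) M' \<longleftrightarrow>
      a = NSkip \<and> M' = {#Out NInit Nil, Out NC (stk \<pi>)#} + runtime n"
    and in_enter_chosen: "\<not> soup_trans (enter_chosen t \<pi> n) (LIn a X) M'"
    and in_skip_chosen: "\<not> soup_trans (skip_chosen t \<pi> n) (LIn a X) M'"
    and in_halted: "\<not> soup_trans (halted n) (LIn a X) M'"
  using assms by (auto simp: soup_in_iff enc_simps Hidden_def)

lemma admin_input:
  assumes "admin M D" "wf_conf D" "soup_trans M (LIn a X) M'" "a \<notin> Hidden"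
  shows "(\<exists>x t n. D = Ev (Lam x t) [] n \<and> a = NLam \<and> admin M' (Ev (tsubst t x (FV n)) [] (Suc n))) \<or>
    (\<exists>g \<pi> n. D = Ev (FV (Suc g)) \<pi> n \<and> a = NSuc \<and> admin M' (Ev (FV g) \<pi> n)) \<or>
    (\<exists>\<pi> n. D = Ev (FV 0) \<pi> n \<and> a = NZ \<and> admin M' (Co \<pi> n)) \<or>
    (\<exists>n. D = Co [] n \<and> a = NDone \<and> M' = halted n)"
  using assms(1)
proof cases
  case (admin_lam_ready x t n)
  moreover have "bvs_free t \<subseteq> {x}" using assms(2) admin_lam_ready by (simp add: wf_conf_Ev wf_term_Lam)
  ultimately show ?thesis
    using assms(3) unfolding admin_lam_ready(1) in_lam_ready[OF assms(4)] by (blast intro: admin_restart)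
next
  case (admin_fv f \<pi> n)
  show ?thesis
  proof (cases f)
    case 0
    then show ?thesis
      using admin_fv assms(3) unfolding admin_fv(1) 0 in_fv_0[OF assms(4)] by (blast intro: admin_init)
  next
    case (Suc g)
    then show ?thesis
      using admin_fv assms(3) unfolding admin_fv(1) Suc in_fv_Suc[OF assms(4)]
      by (blast intro: admin.admin_fv)
  qed
next
  case admin_done_ready
  then show ?thesis using assms(3) unfolding admin_done_ready(1) in_done_ready[OF assms(4)] by blast
qed (insert assms(3,4), auto simp: soup_in_iff enc_simps Hidden_def)

lemmas soup_tau_stepI = converse_rtranclp_into_rtranclp[where r = soup_tau]

lemma admin_Ev_cases:
  assumes "admin M (Ev t \<pi> n)"
  obtains (head) "soup_tau\<^sup>*\<^sup>* M ({#trm t, Out NC (stk \<pi>)#} + runtime n)"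
  | (lam_pop) x u s \<pi>' where "t = Lam x u" "\<pi> = s # \<pi>'"
      "M = {#Out NHd (trm s), Out NC (stk \<pi>'), Out NB Restart, lam_body x u#} + runtime n"
  | (lam_arg) x u s \<pi>' where "t = Lam x u" "\<pi> = s # \<pi>'"
      "M = {#Out NC (stk \<pi>'), Out NB Restart, Inp NB VU (trm (tsubst u x s))#} + runtime n"
  | (lam_empty) x u where "t = Lam x u" "\<pi> = []" "M = {#stk_nil, Out NB Restart, lam_body x u#} + runtime n"
  | (lam_ready) x u where "t = Lam x u" "\<pi> = []" "M = {#Restart, lam_body x u#} + runtime n"
  using assms
proof cases
  case (admin_restart u x m)
  then show ?thesis
    using that(1) tau_restart tau_restart_hd tau_restart_b
    by (metis soup_tau_stepI rtranclp.rtrancl_refl stk.simps(1))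
next
  case (admin_restart_hd u x m)
  then show ?thesis
    using that(1) tau_restart_hd tau_restart_b by (metis soup_tau_stepI rtranclp.rtrancl_refl stk.simps(1))
next
  case (admin_restart_b u x m)
  then show ?thesis using that(1) tau_restart_b by (metis soup_tau_stepI rtranclp.rtrancl_refl stk.simps(1))
next
  case (admin_enter \<pi>')
  then show ?thesis using that(1) tau_enter by (metis soup_tau_stepI rtranclp.rtrancl_refl)
qed (use that in auto)

lemma admin_Co_cases:
  assumes "admin M (Co \<pi> n)"
  obtains (head) "soup_tau\<^sup>*\<^sup>* M ({#Out NC (stk \<pi>), ContP#} + runtime n)"
  | (cont_empty) "\<pi> = []" "M = {#stk_nil, Out NB done_proc, cont_body#} + runtime n"
  | (done_ready) "\<pi> = []" "M = {#done_proc, cont_body#} + runtime n"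
  | (cont_pop) t \<pi>' where "\<pi> = t # \<pi>'"
      "M = {#Out NHd (trm t), Out NC (stk \<pi>'), Out NB done_proc, cont_body#} + runtime n"
  | (cont_arg) t \<pi>' where "\<pi> = t # \<pi>'"
      "M = {#Out NC (stk \<pi>'), Out NB done_proc, Inp NB VU (Choice (trm t))#} + runtime n"
  | (choice) t \<pi>' where "\<pi> = t # \<pi>'"
      "M = {#Out NCh (enter_branch t), Out NCh skip_branch, choice_recv, Out NC (stk \<pi>')#} + runtime n"
  using assms
proof cases
  case admin_init
  then show ?thesis using that(1) tau_init tau_rec by (metis soup_tau_stepI rtranclp.rtrancl_refl)
next
  case admin_rec
  then show ?thesis using that(1) tau_rec by (metis soup_tau_stepI rtranclp.rtrancl_refl)
qed (use that in auto)

lemma admin_lam_ready_reachable: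
  assumes "admin M (Ev (Lam x t) [] n)"
  shows "soup_tau\<^sup>*\<^sup>* M ({#Restart, lam_body x t#} + runtime n)"
  using assms
proof (cases rule: admin_Ev_cases)
  case head
  then show ?thesis using tau_lam_nil tau_lam_empty by (metis soup_tau_stepI rtranclp_trans r_into_rtranclp)
qed (use tau_lam_empty in \<open>auto intro: r_into_rtranclp\<close>)

lemma admin_fv_reachable:
  assumes "admin M (Ev (FV f) \<pi> n)"
  shows "soup_tau\<^sup>*\<^sup>* M ({#num f, Out NC (stk \<pi>)#} + runtime n)"
  using assms by (cases rule: admin_Ev_cases) auto

lemma admin_done_ready_reachable:
  assumes "admin M (Co [] n)"
  shows "soup_tau\<^sup>*\<^sup>* M ({#done_proc, cont_body#} + runtime n)"
  using assms
proof (cases rule: admin_Co_cases)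
  case head
  then show ?thesis using tau_cont_nil tau_cont_empty by (metis soup_tau_stepI rtranclp_trans r_into_rtranclp)
qed (use tau_cont_empty in \<open>auto intro: r_into_rtranclp\<close>)

lemma admin_choice_reachable:
  assumes "admin M (Co (t # \<pi>) n)"
  shows "soup_tau\<^sup>*\<^sup>* M ({#Out NCh (enter_branch t), Out NCh skip_branch, choice_recv, Out NC (stk \<pi>)#}
    + runtime n)"
proof -
  have arg: "soup_tau\<^sup>*\<^sup>* ({#Out NC (stk \<pi>), Out NB done_proc, Inp NB VU (Choice (trm t))#} + runtime n)
    ({#Out NCh (enter_branch t), Out NCh skip_branch, choice_recv, Out NC (stk \<pi>)#} + runtime n)"
    using tau_cont_arg by blast
  have pop: "soup_tau\<^sup>*\<^sup>* ({#Out NHd (trm t), Out NC (stk \<pi>), Out NB done_proc, cont_body#} + runtime n)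
    ({#Out NCh (enter_branch t), Out NCh skip_branch, choice_recv, Out NC (stk \<pi>)#} + runtime n)"
    using tau_cont_pop arg by (blast intro: soup_tau_stepI)
  have cont: "soup_tau\<^sup>*\<^sup>* ({#Out NC (stk (t # \<pi>)), ContP#} + runtime n)
    ({#Out NCh (enter_branch t), Out NCh skip_branch, choice_recv, Out NC (stk \<pi>)#} + runtime n)"
    using tau_cont_cons pop by (blast intro: soup_tau_stepI)
  from assms show ?thesis
    by (cases rule: admin_Co_cases) (use arg pop cont in \<open>auto intro: rtranclp_trans\<close>)
qed

lemma admin_mtau:
  assumes "admin M D" "wf_conf D" "mtau D D'"
  shows "\<exists>M'. soup_tau\<^sup>*\<^sup>* M M' \<and> admin M' D'"
  using assms(3)
proof cases
  case (1 t s \<pi> n)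
  from assms(1) have "soup_tau\<^sup>*\<^sup>* M ({#trm t, Out NC (stk (s # \<pi>))#} + runtime n)"
    unfolding 1 by (cases rule: admin_Ev_cases) (use tau_app in \<open>auto intro: rtranclp.rtrancl_into_rtrancl\<close>)
  moreover have "wf_term t" using assms(2) 1 by (auto simp: wf_conf_Ev wf_term_def)
  ultimately show ?thesis using 1 admin_trm by blast
next
  case (2 x t s \<pi> n)
  have arg: "soup_tau\<^sup>*\<^sup>* ({#Out NC (stk \<pi>), Out NB Restart, Inp NB VU (trm (tsubst t x s))#} + runtime n)
    ({#trm (tsubst t x s), Out NC (stk \<pi>)#} + runtime n)"
    using tau_lam_arg by blast
  have pop: "soup_tau\<^sup>*\<^sup>* ({#Out NHd (trm s), Out NC (stk \<pi>), Out NB Restart, lam_body x t#} + runtime n)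
    ({#trm (tsubst t x s), Out NC (stk \<pi>)#} + runtime n)"
    using tau_lam_pop arg by (blast intro: soup_tau_stepI)
  have lam: "soup_tau\<^sup>*\<^sup>* ({#trm (Lam x t), Out NC (stk (s # \<pi>))#} + runtime n)
    ({#trm (tsubst t x s), Out NC (stk \<pi>)#} + runtime n)"
    using tau_lam_cons pop by (blast intro: soup_tau_stepI)
  from assms(1) have "soup_tau\<^sup>*\<^sup>* M ({#trm (tsubst t x s), Out NC (stk \<pi>)#} + runtime n)"
    unfolding 2 by (cases rule: admin_Ev_cases) (use arg pop lam in \<open>auto intro: rtranclp_trans\<close>)
  moreover have "wf_term (tsubst t x s)"
    using assms(2) 2 by (auto simp: wf_conf_Ev wf_term_Lam intro: wf_term_tsubst)
  ultimately show ?thesis using 2 admin_trm by blast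
qed

lemma admin_mtau_star:
  "mtau\<^sup>*\<^sup>* D D' \<Longrightarrow> admin M D \<Longrightarrow> wf_conf D \<Longrightarrow> \<exists>M'. soup_tau\<^sup>*\<^sup>* M M' \<and> admin M' D'"
proof (induction arbitrary: M rule: converse_rtranclp_induct)
  case (step D D1)
  then obtain M1 where "soup_tau\<^sup>*\<^sup>* M M1" "admin M1 D1" using admin_mtau by blast
  moreover have "wf_conf D1" using wf_conf_mtau step by blast
  ultimately show ?case using step.IH by (meson rtranclp_trans)
qed auto

lemma fv_stk: "\<forall>s\<in>set \<pi>. wf_term s \<Longrightarrow> fv (stk \<pi>) = {}"
  by (induction \<pi>) auto

lemma admin_internal: "admin M D \<Longrightarrow> wf_conf D \<Longrightarrow> internal_soup Hidden M"
proof (induction rule: admin.induct)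
  case (admin_lam_arg \<pi> t x s n)
  then have "wf_term (tsubst t x s)" by (auto simp: wf_conf_Ev wf_term_Lam intro: wf_term_tsubst)
  with admin_lam_arg show ?case
    by (auto simp: internal_soup_def runtime_def RecP_eq Hidden_def wf_conf_Ev fv_stk)
next
  case (admin_restart_b t x n)
  then have "wf_term (tsubst t x (FV n))" by (simp add: wf_term_tsubst)
  then show ?case by (auto simp: internal_soup_def runtime_def RecP_eq Hidden_def)
qed (auto simp: internal_soup_def runtime_def RecP_eq Hidden_def wf_conf_Ev wf_conf_Co fv_stk
    wf_term_Lam fv_trm lam_body_def enter_branch_def rec_body_def wf_term_def)

section \<open>Abstract states of encoded configurations\<close>

text \<open>Running C abstracts every soup obtained from the encoding of C by internal steps
  that are either administrative or follow machine tau-steps; Entering t n and Skipping \<pi> n are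
  the states in which the internal choice of a continuation t # \<pi> has been resolved but the
  corresponding flag has not been emitted yet.\<close>

datatype astate = Running conf | Entering lterm nat | Skipping "lterm list" nat | Halted

inductive represents :: "proc multiset \<Rightarrow> astate \<Rightarrow> bool" where
  represents_Running: "admin M D \<Longrightarrow> mtau\<^sup>*\<^sup>* C D \<Longrightarrow> wf_conf C \<Longrightarrow> represents M (Running C)"
| represents_enter_chosen: "wf_term t \<Longrightarrow> \<forall>s\<in>set \<pi>. wf_term s \<Longrightarrow>
    represents (enter_chosen t \<pi> n) (Entering t n)"
| represents_enter_ready: "wf_term t \<Longrightarrow> \<forall>s\<in>set \<pi>. wf_term s \<Longrightarrow>
    represents (enter_ready t \<pi> n) (Entering t n)"
| represents_skip_chosen: "wf_term t \<Longrightarrow> \<forall>s\<in>set \<pi>. wf_term s \<Longrightarrow>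
    represents (skip_chosen t \<pi> n) (Skipping \<pi> n)"
| represents_skip_ready: "\<forall>s\<in>set \<pi>. wf_term s \<Longrightarrow> represents (skip_ready \<pi> n) (Skipping \<pi> n)"
| represents_halted: "represents (halted n) Halted"

definition commits :: "astate \<Rightarrow> astate \<Rightarrow> bool" where
  "commits k k' = (\<exists>C t \<pi> n. k = Running C \<and> mtau\<^sup>*\<^sup>* C (Co (t # \<pi>) n) \<and>
     (k' = Entering t n \<or> k' = Skipping \<pi> n))"

fun astep :: "astate \<Rightarrow> name \<Rightarrow> astate \<Rightarrow> bool" where
  "astep (Running C) a k' =
     ((a = NLam \<and> (\<exists>x t n. mtau\<^sup>*\<^sup>* C (Ev (Lam x t) [] n) \<and> k' = Running (Ev (tsubst t x (FV n)) [] (Suc n)))) \<or>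
      (a = NSuc \<and> (\<exists>g \<pi> n. mtau\<^sup>*\<^sup>* C (Ev (FV (Suc g)) \<pi> n) \<and> k' = Running (Ev (FV g) \<pi> n))) \<or>
      (a = NZ \<and> (\<exists>\<pi> n. mtau\<^sup>*\<^sup>* C (Ev (FV 0) \<pi> n) \<and> k' = Running (Co \<pi> n))) \<or>
      (a = NDone \<and> (\<exists>n. mtau\<^sup>*\<^sup>* C (Co [] n) \<and> k' = Halted)))"
| "astep (Entering t n) a k' = (a = NEnter \<and> k' = Running (Ev t [] n))"
| "astep (Skipping \<pi> n) a k' = (a = NSkip \<and> k' = Running (Co \<pi> n))"
| "astep Halted a k' = False"

lemma represents_internal: "represents M k \<Longrightarrow> internal_soup Hidden M"
proof (induction rule: represents.induct)
  case (represents_Running M D C)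
  then show ?case using admin_internal wf_conf_mtau_star by blast
qed (auto simp: enter_chosen_def enter_ready_def skip_chosen_def skip_ready_def halted_def runtime_def
    RecP_eq internal_soup_def Hidden_def fv_stk fv_trm enter_branch_def wf_term_def cont_body_def)

lemma represents_tau:
  assumes "represents M k" "soup_tau M M'"
  shows "\<exists>k'. represents M' k' \<and> commits\<^sup>=\<^sup>= k k'"
  using assms(1)
proof cases
  case (represents_Running D C)
  have wfD: "wf_conf D" using represents_Running wf_conf_mtau_star by blast
  from admin_tau[OF represents_Running(2) wfD assms(2)]
  consider "admin M' D" | D' where "mtau D D'" "admin M' D'"
    | t \<pi> n where "D = Co (t # \<pi>) n" "M' = enter_chosen t \<pi> n \<or> M' = skip_chosen t \<pi> n"
    by blast
  then show ?thesis
  proof cases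
    case 1
    then show ?thesis using represents_Running by (auto intro: represents.intros)
  next
    case 2
    then show ?thesis
      using represents_Running by (auto intro: represents.intros rtranclp.rtrancl_into_rtrancl)
  next
    case (3 t \<pi> n)
    moreover from this have "wf_term t" "\<forall>s\<in>set \<pi>. wf_term s" using wfD by (auto simp: wf_conf_Co)
    ultimately show ?thesis
      using represents_Running unfolding commits_def by (blast intro: represents.intros)
  qed
next
  case (represents_enter_chosen t \<pi> n)
  then show ?thesis using assms(2) tau_enter_chosen by (auto intro: represents.intros)
next
  case (represents_skip_chosen t \<pi> n)
  then show ?thesis using assms(2) tau_skip_chosen by (auto intro: represents.intros)
qed (use assms(2) tau_enter_ready tau_skip_ready tau_halted in auto)

lemma represents_tau_star:
  "soup_tau\<^sup>*\<^sup>* M M' \<Longrightarrow> represents M k \<Longrightarrow> \<exists>k'. represents M' k' \<and> commits\<^sup>=\<^sup>= k k'"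
proof (induction rule: rtranclp_induct)
  case (step M1 M2)
  then obtain k1 k2 where "commits\<^sup>=\<^sup>= k k1" "represents M2 k2" "commits\<^sup>=\<^sup>= k1 k2"
    using represents_tau by blast
  moreover have "\<not> commits k1 k2" if "commits k k1" using that unfolding commits_def by auto
  ultimately show ?case by blast
qed auto

lemma represents_input:
  assumes "represents M k" "soup_trans M (LIn a X) M'" "a \<notin> Hidden"
  shows "\<exists>k'. represents M' k' \<and> astep k a k'"
  using assms(1)
proof cases
  case (represents_Running D C)
  have wfD: "wf_conf D" using represents_Running wf_conf_mtau_star by blast
  from admin_input[OF represents_Running(2) wfD assms(2,3)] show ?thesis
  proof (elim disjE exE conjE)
    fix x t n assume "D = Ev (Lam x t) [] n" "a = NLam" "admin M' (Ev (tsubst t x (FV n)) [] (Suc n))"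
    moreover from this(1) have "wf_conf (Ev (tsubst t x (FV n)) [] (Suc n))"
      using wfD by (simp add: wf_conf_Ev wf_term_Lam wf_term_tsubst)
    ultimately show ?thesis using represents_Running by (auto intro: represents.intros)
  next
    fix g \<pi> n assume "D = Ev (FV (Suc g)) \<pi> n" "a = NSuc" "admin M' (Ev (FV g) \<pi> n)"
    moreover from this(1) have "wf_conf (Ev (FV g) \<pi> n)" using wfD by (simp add: wf_conf_Ev)
    ultimately show ?thesis using represents_Running by (auto intro: represents.intros)
  next
    fix \<pi> n assume "D = Ev (FV 0) \<pi> n" "a = NZ" "admin M' (Co \<pi> n)"
    moreover from this(1) have "wf_conf (Co \<pi> n)" using wfD by (simp add: wf_conf_Ev wf_conf_Co)
    ultimately show ?thesis using represents_Running by (auto intro: represents.intros)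
  next
    fix n assume "D = Co [] n" "a = NDone" "M' = halted n"
    then show ?thesis using represents_Running by (auto intro: represents.intros)
  qed
next
  case (represents_enter_ready t \<pi> n)
  have "a = NEnter" "M' = {#Inp NC VU (Par (trm t) (Out NC stk_nil)), Out NC (stk \<pi>)#} + runtime n"
    using assms(2) unfolding represents_enter_ready(1) in_enter_ready[OF assms(3)] by blast+
  moreover have "represents M' (Running (Ev t [] n))"
    unfolding calculation(2) using represents_enter_ready
    by (intro represents_Running[OF admin_enter]) (auto simp: wf_conf_Ev)
  ultimately show ?thesis using represents_enter_ready(2) by auto
next
  case (represents_skip_ready \<pi> n)
  have "a = NSkip" "M' = {#Out NInit Nil, Out NC (stk \<pi>)#} + runtime n"
    using assms(2) unfolding represents_skip_ready(1) in_skip_ready[OF assms(3)] by blast+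
  moreover have "represents M' (Running (Co \<pi> n))"
    unfolding calculation(2) using represents_skip_ready
    by (intro represents_Running[OF admin_init]) (auto simp: wf_conf_Co)
  ultimately show ?thesis using represents_skip_ready(2) by auto
qed (use assms(2) in_enter_chosen[OF assms(3)] in_skip_chosen[OF assms(3)] in_halted[OF assms(3)] in auto)

lemma represents_Running_final:
  assumes "represents M (Running C)" "mtau\<^sup>*\<^sup>* C F" "\<And>X. \<not> mtau F X"
  shows "\<exists>M'. soup_tau\<^sup>*\<^sup>* M M' \<and> admin M' F \<and> wf_conf F"
proof -
  from assms(1) obtain D where D: "admin M D" "mtau\<^sup>*\<^sup>* C D" "wf_conf C"
    by (auto elim: represents.cases)
  have "mtau\<^sup>*\<^sup>* D F" using mtau_star_to_final[OF assms(2) D(2) assms(3)] .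
  moreover have "wf_conf D" using D wf_conf_mtau_star by blast
  ultimately show ?thesis using admin_mtau_star D(1) wf_conf_mtau_star by blast
qed

lemma represents_commit:
  assumes "represents M k" "commits k k'"
  shows "\<exists>M'. soup_tau\<^sup>*\<^sup>* M M' \<and> represents M' k'"
proof -
  from assms(2) obtain C t \<pi> n where k: "k = Running C" "mtau\<^sup>*\<^sup>* C (Co (t # \<pi>) n)"
    "k' = Entering t n \<or> k' = Skipping \<pi> n"
    unfolding commits_def by blast
  obtain M1 where M1: "soup_tau\<^sup>*\<^sup>* M M1" "admin M1 (Co (t # \<pi>) n)" "wf_conf (Co (t # \<pi>) n)"
    using represents_Running_final[OF assms(1)[unfolded k(1)] k(2)] by (auto elim: mtau.cases)
  then have choice: "soup_tau\<^sup>*\<^sup>* M ({#Out NCh (enter_branch t), Out NCh skip_branch, choice_recv,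
      Out NC (stk \<pi>)#} + runtime n)"
    using admin_choice_reachable by (meson rtranclp_trans)
  have "wf_term t" "\<forall>s\<in>set \<pi>. wf_term s" using M1(3) by (auto simp: wf_conf_Co)
  moreover have "soup_tau\<^sup>*\<^sup>* M (enter_chosen t \<pi> n)" "soup_tau\<^sup>*\<^sup>* M (skip_chosen t \<pi> n)"
    using choice tau_choice by (blast intro: rtranclp.rtrancl_into_rtrancl)+
  ultimately show ?thesis using k(3) by (blast intro: represents_enter_chosen represents_skip_chosen)
qed

lemma mtau_final:
  "\<not> mtau (Ev (Lam x t) [] n) X" "\<not> mtau (Ev (FV f) \<pi> n) X" "\<not> mtau (Co \<pi> n) X"
  by (auto elim: mtau.cases)

lemma represents_astep_Running:
  assumes "represents M (Running C)" "astep (Running C) a k'"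
  shows "\<exists>Ma Mb. soup_tau\<^sup>*\<^sup>* M Ma \<and> soup_trans Ma (LIn a Z) Mb \<and> represents Mb k'"
  using assms(2)[unfolded astep.simps]
proof (elim disjE exE conjE)
  fix x t n assume "a = NLam" "mtau\<^sup>*\<^sup>* C (Ev (Lam x t) [] n)"
    and k': "k' = Running (Ev (tsubst t x (FV n)) [] (Suc n))"
  then obtain M1 where M1: "soup_tau\<^sup>*\<^sup>* M M1" "admin M1 (Ev (Lam x t) [] n)" "wf_conf (Ev (Lam x t) [] n)"
    using represents_Running_final[OF assms(1)] mtau_final by blast
  then have "bvs_free t \<subseteq> {x}" by (simp add: wf_conf_Ev wf_term_Lam)
  then have "represents ({#restart_body, lam_body x t#} + runtime n) k'"
    unfolding k' by (intro represents_Running[OF admin_restart]) (auto simp: wf_conf_Ev wf_term_tsubst)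
  then show ?thesis
    using M1 admin_lam_ready_reachable in_lam_ready[of NLam] \<open>a = NLam\<close>
    by (metis flags_not_Hidden rtranclp_trans)
next
  fix g \<pi> n assume "a = NSuc" "mtau\<^sup>*\<^sup>* C (Ev (FV (Suc g)) \<pi> n)" and k': "k' = Running (Ev (FV g) \<pi> n)"
  then obtain M1 where M1: "soup_tau\<^sup>*\<^sup>* M M1" "admin M1 (Ev (FV (Suc g)) \<pi> n)" "wf_conf (Ev (FV (Suc g)) \<pi> n)"
    using represents_Running_final[OF assms(1)] mtau_final by blast
  then have "represents ({#num g, Out NC (stk \<pi>)#} + runtime n) k'"
    unfolding k' by (intro represents_Running[OF admin_fv]) (auto simp: wf_conf_Ev)
  then show ?thesis
    using M1 admin_fv_reachable in_fv_Suc[of NSuc] \<open>a = NSuc\<close>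
    by (metis flags_not_Hidden rtranclp_trans)
next
  fix \<pi> n assume "a = NZ" "mtau\<^sup>*\<^sup>* C (Ev (FV 0) \<pi> n)" and k': "k' = Running (Co \<pi> n)"
  then obtain M1 where M1: "soup_tau\<^sup>*\<^sup>* M M1" "admin M1 (Ev (FV 0) \<pi> n)" "wf_conf (Ev (FV 0) \<pi> n)"
    using represents_Running_final[OF assms(1)] mtau_final by blast
  then have "represents ({#Out NInit Nil, Out NC (stk \<pi>)#} + runtime n) k'"
    unfolding k' by (intro represents_Running[OF admin_init]) (auto simp: wf_conf_Ev wf_conf_Co)
  then show ?thesis
    using M1 admin_fv_reachable in_fv_0[of NZ] \<open>a = NZ\<close>
    by (metis flags_not_Hidden rtranclp_trans)
next
  fix n assume "a = NDone" "mtau\<^sup>*\<^sup>* C (Co [] n)" and k': "k' = Halted"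
  then obtain M1 where M1: "soup_tau\<^sup>*\<^sup>* M M1" "admin M1 (Co [] n)"
    using represents_Running_final[OF assms(1)] mtau_final by blast
  then show ?thesis
    using admin_done_ready_reachable in_done_ready[of NDone] \<open>a = NDone\<close> k' represents_halted
    by (metis flags_not_Hidden rtranclp_trans)
qed

lemma represents_astep:
  assumes "represents M k" "astep k a k'"
  shows "\<exists>Ma Mb. soup_tau\<^sup>*\<^sup>* M Ma \<and> soup_trans Ma (LIn a Z) Mb \<and> represents Mb k'"
proof (cases k)
  case (Running C)
  then show ?thesis using represents_astep_Running assms by blast
next
  case (Entering t n)
  with assms(2) have a: "a = NEnter" and k': "k' = Running (Ev t [] n)" by auto
  from assms(1)[unfolded Entering] obtain \<pi> where
    M: "M = enter_chosen t \<pi> n \<or> M = enter_ready t \<pi> n" "wf_term t" "\<forall>s\<in>set \<pi>. wf_term s"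
    by (cases rule: represents.cases) auto
  have "soup_tau\<^sup>*\<^sup>* M (enter_ready t \<pi> n)" using M(1) tau_enter_chosen by auto
  moreover have "represents ({#Inp NC VU (Par (trm t) (Out NC stk_nil)), Out NC (stk \<pi>)#} + runtime n) k'"
    unfolding k' using M(2,3) by (intro represents_Running[OF admin_enter]) (auto simp: wf_conf_Ev)
  ultimately show ?thesis
    using in_enter_ready[of NEnter] a by (metis flags_not_Hidden)
next
  case (Skipping \<pi> n)
  with assms(2) have a: "a = NSkip" and k': "k' = Running (Co \<pi> n)" by auto
  from assms(1)[unfolded Skipping] obtain t where
    M: "M = skip_chosen t \<pi> n \<or> M = skip_ready \<pi> n" "\<forall>s\<in>set \<pi>. wf_term s"
    by (cases rule: represents.cases) auto
  have "soup_tau\<^sup>*\<^sup>* M (skip_ready \<pi> n)" using M(1) tau_skip_chosen by auto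
  moreover have "represents ({#Out NInit Nil, Out NC (stk \<pi>)#} + runtime n) k'"
    unfolding k' using M(2) by (intro represents_Running[OF admin_init]) (auto simp: wf_conf_Co)
  ultimately show ?thesis
    using in_skip_ready[of NSkip] a by (metis flags_not_Hidden)
next
  case Halted
  with assms(2) show ?thesis by simp
qed

section \<open>Machine bisimilarity implies barbed equivalence\<close>

fun abisim :: "astate \<Rightarrow> astate \<Rightarrow> bool" where
  "abisim (Running C1) (Running C2) = mach_bisimilar C1 C2"
| "abisim (Entering t1 n1) (Entering t2 n2) = mach_bisimilar (Ev t1 [] n1) (Ev t2 [] n2)"
| "abisim (Skipping \<pi>1 n1) (Skipping \<pi>2 n2) = mach_bisimilar (Co \<pi>1 n1) (Co \<pi>2 n2)"
| "abisim Halted Halted = True"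
| "abisim _ _ = False"

lemma abisim_sym: "abisim k1 k2 \<Longrightarrow> abisim k2 k1"
  by (cases k1; cases k2) (auto intro: mach_bisimilarD(1))

lemma abisim_commit:
  assumes "abisim k1 k2" "commits k1 k1'"
  shows "\<exists>k2'. commits k2 k2' \<and> abisim k1' k2'"
proof -
  from assms(2) obtain C1 t1 \<pi>1 n1 where k1: "k1 = Running C1" "mtau\<^sup>*\<^sup>* C1 (Co (t1 # \<pi>1) n1)"
    "k1' = Entering t1 n1 \<or> k1' = Skipping \<pi>1 n1"
    unfolding commits_def by blast
  from assms(1) k1(1) obtain C2 where C2: "k2 = Running C2" "mach_bisimilar C1 C2" by (cases k2) auto
  from k1(3) show ?thesis
  proof
    assume k1': "k1' = Entering t1 n1"
    have "weak_mstep C1 FEnter (Ev t1 [] n1)" using k1(2) by (blast intro: weak_mstepI mstep.intros)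
    then obtain D2 C2' where "mtau\<^sup>*\<^sup>* C2 D2" "mstep D2 FEnter C2'" "mach_bisimilar (Ev t1 [] n1) C2'"
      using mach_bisimilarD(2)[OF C2(2)] unfolding weak_mstep_def by blast
    then obtain t2 \<pi>2 n2 where "mtau\<^sup>*\<^sup>* C2 (Co (t2 # \<pi>2) n2)" "mach_bisimilar (Ev t1 [] n1) (Ev t2 [] n2)"
      by (auto elim!: mstep.cases)
    then show ?thesis using k1' C2(1) unfolding commits_def by (intro exI[of _ "Entering t2 n2"]) auto
  next
    assume k1': "k1' = Skipping \<pi>1 n1"
    have "weak_mstep C1 FSkip (Co \<pi>1 n1)" using k1(2) by (blast intro: weak_mstepI mstep.intros)
    then obtain D2 C2' where "mtau\<^sup>*\<^sup>* C2 D2" "mstep D2 FSkip C2'" "mach_bisimilar (Co \<pi>1 n1) C2'"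
      using mach_bisimilarD(2)[OF C2(2)] unfolding weak_mstep_def by blast
    then obtain t2 \<pi>2 n2 where "mtau\<^sup>*\<^sup>* C2 (Co (t2 # \<pi>2) n2)" "mach_bisimilar (Co \<pi>1 n1) (Co \<pi>2 n2)"
      by (auto elim!: mstep.cases)
    then show ?thesis using k1' C2(1) unfolding commits_def by (intro exI[of _ "Skipping \<pi>2 n2"]) auto
  qed
qed

lemma abisim_astep_Running:
  assumes "mach_bisimilar C1 C2" "astep (Running C1) a k1'"
  shows "\<exists>k2'. astep (Running C2) a k2' \<and> abisim k1' k2'"
  using assms(2)[unfolded astep.simps]
proof (elim disjE exE conjE)
  fix x t n assume "a = NLam" "mtau\<^sup>*\<^sup>* C1 (Ev (Lam x t) [] n)"
    and k1': "k1' = Running (Ev (tsubst t x (FV n)) [] (Suc n))"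
  then have "weak_mstep C1 FLam (Ev (tsubst t x (FV n)) [] (Suc n))" by (blast intro: weak_mstepI mstep.intros)
  then obtain D2 C2' where "mtau\<^sup>*\<^sup>* C2 D2" "mstep D2 FLam C2'"
    "mach_bisimilar (Ev (tsubst t x (FV n)) [] (Suc n)) C2'"
    using mach_bisimilarD(2)[OF assms(1)] unfolding weak_mstep_def by blast
  then obtain y u m where "mtau\<^sup>*\<^sup>* C2 (Ev (Lam y u) [] m)"
    "mach_bisimilar (Ev (tsubst t x (FV n)) [] (Suc n)) (Ev (tsubst u y (FV m)) [] (Suc m))"
    by (auto elim!: mstep.cases)
  then show ?thesis using \<open>a = NLam\<close> k1'
    by (intro exI[of _ "Running (Ev (tsubst u y (FV m)) [] (Suc m))"]) auto
next
  fix g \<pi> n assume "a = NSuc" "mtau\<^sup>*\<^sup>* C1 (Ev (FV (Suc g)) \<pi> n)" and k1': "k1' = Running (Ev (FV g) \<pi> n)"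
  then have "weak_mstep C1 (FFree (Suc g)) (Co \<pi> n)" by (blast intro: weak_mstepI mstep.intros)
  then obtain D2 C2' where "mtau\<^sup>*\<^sup>* C2 D2" "mstep D2 (FFree (Suc g)) C2'" "mach_bisimilar (Co \<pi> n) C2'"
    using mach_bisimilarD(2)[OF assms(1)] unfolding weak_mstep_def by blast
  then obtain \<pi>2 n2 where "mtau\<^sup>*\<^sup>* C2 (Ev (FV (Suc g)) \<pi>2 n2)" "mach_bisimilar (Co \<pi> n) (Co \<pi>2 n2)"
    by (auto elim!: mstep.cases)
  then show ?thesis using \<open>a = NSuc\<close> k1' mach_bisimilar_Ev_FV
    by (intro exI[of _ "Running (Ev (FV g) \<pi>2 n2)"]) auto
next
  fix \<pi> n assume "a = NZ" "mtau\<^sup>*\<^sup>* C1 (Ev (FV 0) \<pi> n)" and k1': "k1' = Running (Co \<pi> n)"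
  then have "weak_mstep C1 (FFree 0) (Co \<pi> n)" by (blast intro: weak_mstepI mstep.intros)
  then obtain D2 C2' where "mtau\<^sup>*\<^sup>* C2 D2" "mstep D2 (FFree 0) C2'" "mach_bisimilar (Co \<pi> n) C2'"
    using mach_bisimilarD(2)[OF assms(1)] unfolding weak_mstep_def by blast
  then obtain \<pi>2 n2 where "mtau\<^sup>*\<^sup>* C2 (Ev (FV 0) \<pi>2 n2)" "mach_bisimilar (Co \<pi> n) (Co \<pi>2 n2)"
    by (auto elim!: mstep.cases)
  then show ?thesis using \<open>a = NZ\<close> k1' by (intro exI[of _ "Running (Co \<pi>2 n2)"]) auto
next
  fix n assume "a = NDone" "mtau\<^sup>*\<^sup>* C1 (Co [] n)" and k1': "k1' = Halted"
  then have "weak_mterm C1 FDone" unfolding weak_mterm_def by (blast intro: mterm.intros)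
  then obtain D2 where "mtau\<^sup>*\<^sup>* C2 D2" "mterm D2 FDone"
    using mach_bisimilarD(3)[OF assms(1)] unfolding weak_mterm_def by blast
  then show ?thesis using \<open>a = NDone\<close> k1' by (auto elim!: mterm.cases)
qed

lemma abisim_astep:
  assumes "abisim k1 k2" "astep k1 a k1'"
  shows "\<exists>k2'. astep k2 a k2' \<and> abisim k1' k2'"
proof (cases k1)
  case (Running C1)
  with assms obtain C2 where "k2 = Running C2" "mach_bisimilar C1 C2" by (cases k2) auto
  then show ?thesis using abisim_astep_Running assms(2) Running by blast
next
  case (Entering t1 n1)
  with assms show ?thesis by (cases k2) auto
next
  case (Skipping \<pi>1 n1)
  with assms show ?thesis by (cases k2) auto
qed (use assms in simp)

definition represent_bisim :: "proc multiset \<Rightarrow> proc multiset \<Rightarrow> bool" where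
  "represent_bisim M1 M2 = (\<exists>k1 k2. represents M1 k1 \<and> represents M2 k2 \<and> abisim k1 k2)"

lemma soup_bisim_represent_bisim: "soup_bisim Hidden represent_bisim"
  unfolding soup_bisim_def
proof (intro conjI allI impI)
  show "symp represent_bisim" unfolding symp_def represent_bisim_def using abisim_sym by blast
next
  fix M1 M2 assume "represent_bisim M1 M2"
  then obtain k1 k2 where k: "represents M1 k1" "represents M2 k2" "abisim k1 k2"
    unfolding represent_bisim_def by blast
  show "internal_soup Hidden M1" using represents_internal k(1) .
  show "\<exists>M2'. soup_tau\<^sup>*\<^sup>* M2 M2' \<and> represent_bisim M1' M2'" if tau: "soup_tau M1 M1'" for M1'
  proof -
    obtain k1' where k1': "represents M1' k1'" "commits\<^sup>=\<^sup>= k1 k1'" using represents_tau[OF k(1) tau] by blast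
    show ?thesis
    proof (cases "k1' = k1")
      case True
      then show ?thesis using k k1' unfolding represent_bisim_def by blast
    next
      case False
      then obtain k2' where "commits k2 k2'" "abisim k1' k2'" using abisim_commit k(3) k1'(2) by blast
      moreover from this(1) obtain M2' where "soup_tau\<^sup>*\<^sup>* M2 M2'" "represents M2' k2'"
        using represents_commit k(2) by blast
      ultimately show ?thesis using k1' unfolding represent_bisim_def by blast
    qed
  qed
  show "\<exists>M2a M2'. soup_tau\<^sup>*\<^sup>* M2 M2a \<and> soup_trans M2a (LIn a X) M2' \<and> represent_bisim M1' M2'"
    if a: "a \<notin> Hidden" and "fv X = {}" and in1: "soup_trans M1 (LIn a X) M1'" for a X M1'
  proof -
    obtain k1' where k1': "represents M1' k1'" "astep k1 a k1'" using represents_input[OF k(1) in1 a] by blast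
    then obtain k2' where "astep k2 a k2'" "abisim k1' k2'" using abisim_astep k(3) by blast
    moreover from this(1) obtain Ma Mb where "soup_tau\<^sup>*\<^sup>* M2 Ma" "soup_trans Ma (LIn a X) Mb" "represents Mb k2'"
      using represents_astep k(2) by blast
    ultimately show ?thesis using k1' unfolding represent_bisim_def by blast
  qed
qed

lemma comps_tr_conf:
  "comps (tr_conf (Ev t \<pi> n)) = {#trm t, Out NC (stk \<pi>)#} + runtime n"
  "comps (tr_conf (Co \<pi> n)) = {#Out NC (stk \<pi>), ContP#} + runtime n"
  by (simp_all add: runtime_def RecP_eq)

lemma represents_tr_conf:
  assumes "wf_conf C"
  shows "represents (comps (tr_conf C)) (Running C)"
proof (cases C)
  case (Ev t \<pi> n)
  then show ?thesis using assms admin_trm[of t \<pi> n]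
    unfolding Ev comps_tr_conf by (auto simp: wf_conf_Ev intro: represents_Running)
next
  case (Co \<pi> n)
  then show ?thesis using assms admin_cont[of \<pi> n] unfolding Co comps_tr_conf by (auto intro: represents_Running)
qed

theorem mach_bisimilar_barbed_equiv:
  assumes "wf_conf C" "wf_conf C'" "mach_bisimilar C C'"
  shows "barbed_equiv Hidden (tr_conf C) (tr_conf C')"
proof (rule soup_bisim_barbed_equiv[OF soup_bisim_represent_bisim])
  show "represent_bisim (comps (tr_conf C)) (comps (tr_conf C'))"
    unfolding represent_bisim_def using represents_tr_conf assms by fastforce
qed

section \<open>Barbed equivalence implies machine bisimilarity\<close>

fun apath :: "astate \<Rightarrow> name list \<Rightarrow> astate \<Rightarrow> bool" where
  "apath k [] k' = commits\<^sup>=\<^sup>= k k'"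
| "apath k (a # w) k' = (\<exists>k1 k2. commits\<^sup>=\<^sup>= k k1 \<and> astep k1 a k2 \<and> apath k2 w k')"

lemma commits_refl: "commits\<^sup>=\<^sup>= k k"
  by simp

lemma commits_trans: "commits\<^sup>=\<^sup>= k1 k2 \<Longrightarrow> commits\<^sup>=\<^sup>= k2 k3 \<Longrightarrow> commits\<^sup>=\<^sup>= k1 k3"
  by (auto simp: commits_def)

text \<open>A test offers the flags of w as parallel outputs; each flag the encoding consumes
  records one visible machine step.\<close>

fun flag_outs :: "name list \<Rightarrow> proc" where
  "flag_outs [] = Nil"
| "flag_outs (a # w) = Par (Out a Nil) (flag_outs w)"

lemma comps_flag_outs: "comps (flag_outs w) = mset (map (\<lambda>a. Out a Nil) w)"
  by (induction w) auto

lemma fn_flag_outs: "fn (flag_outs w) = set w"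
  by (induction w) auto

lemma fv_flag_outs: "fv (flag_outs w) = {}"
  by (induction w) auto

lemma mset_flag_outs_inj:
  assumes "mset (map (\<lambda>a. Out a Nil) w) = mset (map (\<lambda>a. Out a Nil) w')"
  shows "mset w = mset w'"
  using arg_cong[OF assms, of "image_mset (\<lambda>p. case p of Out a X \<Rightarrow> a)"]
  by (simp add: multiset.map_comp comp_def)

lemma soup_tau_feed: "soup_trans M (LIn a X) M' \<Longrightarrow> soup_tau (M + {#Out a X#}) M'"
  unfolding soup_tau_def
  using soup_trans_comm[of "{#Out a X#}" a X "{#}" M M'] by (simp add: soup_trans.simps add.commute)

lemma represents_tested_step:
  assumes "soup_tau (T + M) N" "represents M k" "\<forall>p\<in>#T. \<exists>a. p = Out a Nil \<and> a \<notin> Hidden"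
  shows "\<exists>T' M' w k'. N = T' + M' \<and> represents M' k' \<and> apath k w k' \<and>
    T = T' + mset (map (\<lambda>a. Out a Nil) w)"
  using assms(1)[unfolded soup_tau_def]
proof (cases rule: soup_trans_plus_cases)
  case (left T')
  then show ?thesis using assms(3) by (auto simp: soup_trans.simps)
next
  case (right M')
  then obtain k' where "represents M' k'" "commits\<^sup>=\<^sup>= k k'"
    using represents_tau assms(2) unfolding soup_tau_def by blast
  then show ?thesis using right(2) by (intro exI[of _ T] exI[of _ M'] exI[of _ "[]"]) auto
next
  case (comm_left a X T' M')
  then have "X = Nil" "a \<notin> Hidden" "T = T' + {#Out a Nil#}"
    using assms(3) by (auto simp: soup_trans.simps)
  moreover obtain k' where "represents M' k'" "astep k a k'"
    using represents_input assms(2) comm_left(3) calculation(2) by blast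
  ultimately show ?thesis using comm_left(4) by (intro exI[of _ T'] exI[of _ M'] exI[of _ "[a]"]) auto
next
  case (comm_right a X T' M')
  then show ?thesis using assms(3) by (auto simp: soup_trans.simps)
qed

lemma apath_commit_left: "commits\<^sup>=\<^sup>= k k1 \<Longrightarrow> apath k1 w k2 \<Longrightarrow> apath k w k2"
  by (cases w) (metis apath.simps(1) commits_trans, metis apath.simps(2) commits_trans)

lemma apath_append: "apath k w k1 \<Longrightarrow> apath k1 w' k2 \<Longrightarrow> apath k (w @ w') k2"
  by (induction w arbitrary: k) (auto intro: apath_commit_left)

lemma represents_tested_run:
  assumes "soup_tau\<^sup>*\<^sup>* (T + M) N" "represents M k" "\<forall>p\<in>#T. \<exists>a. p = Out a Nil \<and> a \<notin> Hidden"
  shows "\<exists>T' M' w k'. N = T' + M' \<and> represents M' k' \<and> apath k w k' \<and>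
    T = T' + mset (map (\<lambda>a. Out a Nil) w)"
  using assms(1)
proof (induction rule: rtranclp_induct)
  case base
  then show ?case using assms(2) by (intro exI[of _ T] exI[of _ M] exI[of _ "[]"]) auto
next
  case (step N N')
  then obtain T1 M1 w1 k1 where 1: "N = T1 + M1" "represents M1 k1" "apath k w1 k1"
    "T = T1 + mset (map (\<lambda>a. Out a Nil) w1)"
    by blast
  moreover have "\<forall>p\<in>#T1. \<exists>a. p = Out a Nil \<and> a \<notin> Hidden" using assms(3) 1(4) by auto
  ultimately obtain T2 M2 w2 k2 where "N' = T2 + M2" "represents M2 k2" "apath k1 w2 k2"
    "T1 = T2 + mset (map (\<lambda>a. Out a Nil) w2)"
    using represents_tested_step step(2) by metis
  then show ?case using 1 apath_append by (intro exI[of _ T2] exI[of _ M2] exI[of _ "w1 @ w2"]) auto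
qed

lemma represents_no_weak_out_barb:
  assumes "represents (comps P) k"
  shows "\<not> weak_barb Hidden P (BOut a)"
proof
  assume "weak_barb Hidden P (BOut a)"
  then obtain M' X where "soup_tau\<^sup>*\<^sup>* (comps P) M'" "a \<notin> Hidden" "Out a X \<in># M'"
    unfolding weak_barb_iff_soup soup_barb_def by auto
  moreover from this(1) obtain k' where "represents M' k'" using represents_tau_star assms by blast
  ultimately show False using represents_internal unfolding internal_soup_def by blast
qed

lemma weak_in_barb_astep:
  assumes "represents (comps Q) k" "weak_barb Hidden Q (BIn a)"
  shows "\<exists>k1 k2. commits\<^sup>=\<^sup>= k k1 \<and> astep k1 a k2"
proof -
  obtain M' y R where M': "soup_tau\<^sup>*\<^sup>* (comps Q) M'" "a \<notin> Hidden" "Inp a y R \<in># M'"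
    using assms(2) unfolding weak_barb_iff_soup soup_barb_def by auto
  obtain k1 where k1: "represents M' k1" "commits\<^sup>=\<^sup>= k k1" using represents_tau_star[OF M'(1) assms(1)] by blast
  have "soup_trans M' (LIn a Nil) (M' - {#Inp a y R#} + comps (psubst R y Nil))"
    using M'(3) by (rule soup_inI) simp
  then obtain k2 where "astep k1 a k2" using represents_input k1(1) M'(2) by blast
  then show ?thesis using k1(2) by blast
qed

lemma astep_weak_in_barb:
  assumes "represents (comps P) k" "commits\<^sup>=\<^sup>= k k1" "astep k1 a k'" "a \<notin> Hidden"
  shows "weak_barb Hidden P (BIn a)"
proof -
  obtain M1 where M1: "soup_tau\<^sup>*\<^sup>* (comps P) M1" "represents M1 k1"
    using assms(1,2) represents_commit by blast
  obtain Ma Mb where "soup_tau\<^sup>*\<^sup>* M1 Ma" "soup_trans Ma (LIn a Nil) Mb"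
    using represents_astep[OF M1(2) assms(3)] by blast
  moreover from this(2) have "soup_barb Hidden Ma (BIn a)"
    using assms(4) unfolding soup_trans.simps soup_barb_def by auto
  ultimately show ?thesis unfolding weak_barb_iff_soup using M1(1) by (meson rtranclp_trans)
qed

text \<open>A committed state has lost the alternative branch of the internal choice, so it cannot
  be barbed equivalent to a continuation state, which still offers both flags (or done).\<close>

lemma committed_not_barbed_equiv:
  assumes "represents (comps P) (Running (Co \<pi> n))" "represents (comps Q) k"
    and "k = Entering t m \<or> k = Skipping \<pi>' m"
  shows "\<not> barbed_equiv Hidden P Q"
proof
  assume PQ: "barbed_equiv Hidden P Q"
  have after_commit: "\<not> astep k1 b k2" if "commits\<^sup>=\<^sup>= k k1" "b \<noteq> (case k of Entering _ _ \<Rightarrow> NEnter | _ \<Rightarrow> NSkip)"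
    for k1 b k2
    using that assms(3) by (auto simp: commits_def)
  show False
  proof (cases \<pi>)
    case Nil
    then have "astep (Running (Co \<pi> n)) NDone Halted" by auto
    then have "weak_barb Hidden P (BIn NDone)" by (intro astep_weak_in_barb[OF assms(1)]) auto
    then have "weak_barb Hidden Q (BIn NDone)" by (rule barbed_equiv_weak_barb[OF PQ])
    then show False using weak_in_barb_astep[OF assms(2)] after_commit assms(3) by fastforce
  next
    case (Cons u \<pi>2)
    then have "commits (Running (Co \<pi> n)) (Entering u n)" "commits (Running (Co \<pi> n)) (Skipping \<pi>2 n)"
      unfolding commits_def by auto
    then have "weak_barb Hidden P (BIn NEnter)" "weak_barb Hidden P (BIn NSkip)"
      by (auto intro: astep_weak_in_barb[OF assms(1)])
    then have "weak_barb Hidden Q (BIn NEnter)" "weak_barb Hidden Q (BIn NSkip)"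
      by (auto intro: barbed_equiv_weak_barb[OF PQ])
    then show False using weak_in_barb_astep[OF assms(2)] after_commit assms(3) by fastforce
  qed
qed

text \<open>If P consumes all flags of a test and Q is barbed equivalent to P, then Q consumes them
  too: a leftover flag would be a visible output barb, which encoded configurations never
  have.\<close>

lemma barbed_equiv_test:
  assumes PQ: "barbed_equiv Hidden P Q" and Q: "represents (comps Q) kq" and w: "set w \<inter> Hidden = {}"
    and P1: "soup_tau\<^sup>*\<^sup>* (comps P + comps (flag_outs w)) M1" "represents M1 k1"
  shows "\<exists>P1 Q1 w' kq'. comps P1 = M1 \<and> barbed_equiv Hidden P1 Q1 \<and> represents (comps Q1) kq' \<and>
    apath kq w' kq' \<and> mset w' = mset w"
proof -
  have "barbed_equiv Hidden (Par P (flag_outs w)) (Par Q (flag_outs w))"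
    using barbed_equiv_par[OF PQ] w by (simp add: fn_flag_outs fv_flag_outs)
  moreover obtain P1 where "tau_star (Par P (flag_outs w)) P1" "comps P1 = M1"
    using soup_tau_star_tau_star[of "Par P (flag_outs w)"] P1(1) by auto
  ultimately obtain Q1 where Q1: "tau_star (Par Q (flag_outs w)) Q1" "barbed_equiv Hidden P1 Q1"
    using barbed_equiv_tau_star by blast
  have "soup_tau\<^sup>*\<^sup>* (comps (flag_outs w) + comps Q) (comps Q1)"
    using tau_star_soup_tau_star[OF Q1(1)] by (simp add: add.commute)
  moreover have "\<forall>p\<in>#comps (flag_outs w). \<exists>a. p = Out a Nil \<and> a \<notin> Hidden"
    using w by (auto simp: comps_flag_outs)
  ultimately obtain T M' w' kq' where r: "comps Q1 = T + M'" "represents M' kq'" "apath kq w' kq'"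
    "comps (flag_outs w) = T + mset (map (\<lambda>a. Out a Nil) w')"
    using represents_tested_run Q by blast
  have "T = {#}"
  proof (rule ccontr)
    assume "T \<noteq> {#}"
    then obtain p where "p \<in># T" by auto
    moreover from this have "p \<in># comps (flag_outs w)" using r(4) by simp
    ultimately obtain a where "Out a Nil \<in># T" "a \<notin> Hidden"
      using w by (auto simp: comps_flag_outs)
    then have "has_barb Hidden Q1 (BOut a)" using r(1) by (auto simp: has_barb_iff_soup_barb soup_barb_def)
    then have "weak_barb Hidden P1 (BOut a)" using barbed_equiv_barb barbed_equiv_sym Q1(2) by blast
    then show False using represents_no_weak_out_barb P1(2) \<open>comps P1 = M1\<close> by blast
  qed
  then have "mset w' = mset w" using r(4) mset_flag_outs_inj by (metis add_0 comps_flag_outs)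
  then show ?thesis using r \<open>T = {#}\<close> \<open>comps P1 = M1\<close> Q1(2) by auto
qed

lemma commits_Running_Ev: "commits\<^sup>=\<^sup>= (Running (Ev t \<pi> n)) k \<Longrightarrow> k = Running (Ev t \<pi> n)"
  by (auto simp: commits_def dest: mtau_star_Ev)

lemma commits_Running_Co:
  "commits\<^sup>=\<^sup>= (Running (Co \<pi> n)) k \<Longrightarrow>
    k = Running (Co \<pi> n) \<or> (\<exists>t \<pi>'. \<pi> = t # \<pi>' \<and> (k = Entering t n \<or> k = Skipping \<pi>' n))"
  by (auto simp: commits_def dest: mtau_star_Co)

lemma astep_uncommitted:
  "commits\<^sup>=\<^sup>= (Running C) k1 \<Longrightarrow> astep k1 a k2 \<Longrightarrow> a \<noteq> NEnter \<Longrightarrow> a \<noteq> NSkip \<Longrightarrow> k1 = Running C"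
  by (auto simp: commits_def)

lemma barbed_equiv_uncommitted:
  assumes "represents (comps P) (Running (Co \<pi> n))" "represents (comps Q) k" "barbed_equiv Hidden P Q"
    and "commits\<^sup>=\<^sup>= (Running (Co \<pi>' n')) k"
  shows "k = Running (Co \<pi>' n')"
  using commits_Running_Co[OF assms(4)] committed_not_barbed_equiv[OF assms(1,2)] assms(3) by blast

lemma apath_free_var:
  "apath (Running C) w k' \<Longrightarrow> set w \<subseteq> {NSuc, NZ} \<Longrightarrow> NZ \<in> set w \<Longrightarrow>
    \<exists>g \<pi> n. mtau\<^sup>*\<^sup>* C (Ev (FV g) \<pi> n) \<and> w = replicate g NSuc @ [NZ] \<and> commits\<^sup>=\<^sup>= (Running (Co \<pi> n)) k'"
proof (induction w arbitrary: C)
  case (Cons a w)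
  then obtain k1 k2 where k: "commits\<^sup>=\<^sup>= (Running C) k1" "astep k1 a k2" "apath k2 w k'" by auto
  have a: "a = NSuc \<or> a = NZ" using Cons.prems by auto
  then have k1: "k1 = Running C" using astep_uncommitted k by blast
  from a show ?case
  proof
    assume "a = NSuc"
    then obtain g \<pi> n where g: "mtau\<^sup>*\<^sup>* C (Ev (FV (Suc g)) \<pi> n)" "k2 = Running (Ev (FV g) \<pi> n)"
      using k(2) k1 by auto
    have "NZ \<in> set w" "set w \<subseteq> {NSuc, NZ}" using Cons.prems \<open>a = NSuc\<close> by auto
    then obtain g' \<pi>' n' where "mtau\<^sup>*\<^sup>* (Ev (FV g) \<pi> n) (Ev (FV g') \<pi>' n')" "w = replicate g' NSuc @ [NZ]"
      "commits\<^sup>=\<^sup>= (Running (Co \<pi>' n')) k'"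
      using Cons.IH k(3) g(2) by blast
    then show ?thesis using g(1) \<open>a = NSuc\<close> mtau_star_Ev_FV
      by (intro exI[of _ "Suc g"] exI[of _ \<pi>] exI[of _ n]) fastforce
  next
    assume "a = NZ"
    then obtain \<pi> n where g: "mtau\<^sup>*\<^sup>* C (Ev (FV 0) \<pi> n)" "k2 = Running (Co \<pi> n)"
      using k(2) k1 by auto
    have "w = []"
    proof (rule ccontr)
      assume "w \<noteq> []"
      then obtain b w' where "w = b # w'" by (cases w) auto
      then obtain k3 k4 where "commits\<^sup>=\<^sup>= (Running (Co \<pi> n)) k3" "astep k3 b k4" "b = NSuc \<or> b = NZ"
        using k(3) g(2) Cons.prems by auto
      then show False using astep_uncommitted mtau_star_Co by fastforce
    qed
    then show ?thesis using g k(3) \<open>a = NZ\<close> by (intro exI[of _ 0] exI[of _ \<pi>] exI[of _ n]) auto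
  qed
qed simp

lemma represents_test_step:
  assumes "represents M k" "commits\<^sup>=\<^sup>= k k1" "astep k1 a k'"
  shows "\<exists>M1. soup_tau\<^sup>*\<^sup>* (M + comps (flag_outs [a])) M1 \<and> represents M1 k'"
proof -
  obtain M0 where M0: "soup_tau\<^sup>*\<^sup>* M M0" "represents M0 k1"
    using assms(1,2) represents_commit by blast
  obtain Ma Mb where h: "soup_tau\<^sup>*\<^sup>* M0 Ma" "soup_trans Ma (LIn a Nil) Mb" "represents Mb k'"
    using represents_astep[OF M0(2) assms(3)] by blast
  have "soup_tau\<^sup>*\<^sup>* (M + {#Out a Nil#}) (Ma + {#Out a Nil#})"
    using soup_tau_star_frame M0(1) h(1) by (meson rtranclp_trans)
  moreover have "soup_tau (Ma + {#Out a Nil#}) Mb" using soup_tau_feed[OF h(2)] .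
  ultimately show ?thesis using h(3) by (auto intro: rtranclp.rtrancl_into_rtrancl)
qed

lemma represents_test_free_var:
  "represents M (Running C) \<Longrightarrow> mtau\<^sup>*\<^sup>* C (Ev (FV f) \<pi> n) \<Longrightarrow>
     \<exists>M1. soup_tau\<^sup>*\<^sup>* (M + comps (flag_outs (replicate f NSuc @ [NZ]))) M1 \<and> represents M1 (Running (Co \<pi> n))"
proof (induction f arbitrary: C M)
  case 0
  then have "astep (Running C) NZ (Running (Co \<pi> n))" by auto
  then show ?case using represents_test_step[OF 0(1) commits_refl] by simp
next
  case (Suc f)
  then have "astep (Running C) NSuc (Running (Ev (FV f) \<pi> n))" by auto
  then obtain Ma Mb where h: "soup_tau\<^sup>*\<^sup>* M Ma" "soup_trans Ma (LIn NSuc Nil) Mb" "represents Mb (Running (Ev (FV f) \<pi> n))"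
    using represents_astep Suc.prems(1) by blast
  define T where "T = comps (flag_outs (replicate f NSuc @ [NZ]))"
  obtain M1 where M1: "soup_tau\<^sup>*\<^sup>* (Mb + T) M1" "represents M1 (Running (Co \<pi> n))"
    using Suc.IH[OF h(3)] unfolding T_def by blast
  have "soup_tau\<^sup>*\<^sup>* (M + ({#Out NSuc Nil#} + T)) (Ma + {#Out NSuc Nil#} + T)"
    using soup_tau_star_frame[OF h(1), of "{#Out NSuc Nil#} + T"] by (simp add: add.assoc)
  moreover have "soup_tau (Ma + {#Out NSuc Nil#} + T) (Mb + T)"
    using soup_trans_frame[OF soup_tau_feed[OF h(2), unfolded soup_tau_def], of T] by (simp add: soup_tau_def)
  moreover have "comps (flag_outs (replicate (Suc f) NSuc @ [NZ])) = {#Out NSuc Nil#} + T"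
    unfolding T_def by simp
  ultimately show ?case using M1 by (metis rtranclp.rtrancl_into_rtrancl rtranclp_trans)
qed

definition barbed_related :: "conf \<Rightarrow> conf \<Rightarrow> bool" where
  "barbed_related C1 C2 = (\<exists>P Q. represents (comps P) (Running C1) \<and> represents (comps Q) (Running C2) \<and>
     barbed_equiv Hidden P Q)"

lemma barbed_related_test:
  assumes "barbed_related C1 C2" "set w \<inter> Hidden = {}"
    and "\<And>P. represents (comps P) (Running C1) \<Longrightarrow>
      \<exists>M1. soup_tau\<^sup>*\<^sup>* (comps P + comps (flag_outs w)) M1 \<and> represents M1 (Running C1')"
  shows "\<exists>P1 Q1 w' k2'. represents (comps P1) (Running C1') \<and> represents (comps Q1) k2' \<and>
    barbed_equiv Hidden P1 Q1 \<and> apath (Running C2) w' k2' \<and> mset w' = mset w"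
proof -
  obtain P Q where PQ: "represents (comps P) (Running C1)" "represents (comps Q) (Running C2)"
    "barbed_equiv Hidden P Q"
    using assms(1) unfolding barbed_related_def by blast
  obtain M1 where "soup_tau\<^sup>*\<^sup>* (comps P + comps (flag_outs w)) M1" "represents M1 (Running C1')"
    using assms(3)[OF PQ(1)] by blast
  with barbed_equiv_test[OF PQ(3,2) assms(2)] show ?thesis by metis
qed

lemma barbed_related_flag:
  assumes "barbed_related C1 C2" "commits\<^sup>=\<^sup>= (Running C1) k1" "astep k1 a (Running C1')" "a \<notin> Hidden"
  shows "\<exists>P1 Q1 k1' k2 k2'. represents (comps P1) (Running C1') \<and> represents (comps Q1) k2' \<and>
    barbed_equiv Hidden P1 Q1 \<and> commits\<^sup>=\<^sup>= (Running C2) k1' \<and> astep k1' a k2 \<and> commits\<^sup>=\<^sup>= k2 k2'"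
proof -
  have "\<exists>M1. soup_tau\<^sup>*\<^sup>* (comps P + comps (flag_outs [a])) M1 \<and> represents M1 (Running C1')"
    if "represents (comps P) (Running C1)" for P
    using represents_test_step[OF that assms(2,3)] .
  moreover have "set [a] \<inter> Hidden = {}" using assms(4) by simp
  ultimately obtain P1 Q1 w' k2' where r: "represents (comps P1) (Running C1')"
    "represents (comps Q1) k2'" "barbed_equiv Hidden P1 Q1" "apath (Running C2) w' k2'" "mset w' = mset [a]"
    using barbed_related_test[OF assms(1)] by blast
  from r(5) have "w' = [a]" by simp
  with r show ?thesis by (simp only: apath.simps) blast
qed

lemma barbed_related_lam:
  assumes "barbed_related C1 C2" "mtau\<^sup>*\<^sup>* C1 (Ev (Lam x t) [] n)"
  shows "\<exists>C2'. weak_mstep C2 FLam C2' \<and> barbed_related (Ev (tsubst t x (FV n)) [] (Suc n)) C2'"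
proof -
  have "astep (Running C1) NLam (Running (Ev (tsubst t x (FV n)) [] (Suc n)))" using assms(2) by auto
  then obtain P1 Q1 k1 k2 k2' where r: "represents (comps P1) (Running (Ev (tsubst t x (FV n)) [] (Suc n)))"
    "represents (comps Q1) k2'" "barbed_equiv Hidden P1 Q1"
    and k: "commits\<^sup>=\<^sup>= (Running C2) k1" "astep k1 NLam k2" "commits\<^sup>=\<^sup>= k2 k2'"
    using barbed_related_flag[OF assms(1) commits_refl] by (metis flags_not_Hidden(1))
  then obtain y u m where "mtau\<^sup>*\<^sup>* C2 (Ev (Lam y u) [] m)" "k2 = Running (Ev (tsubst u y (FV m)) [] (Suc m))"
    using astep_uncommitted[OF k(1,2)] by auto
  moreover from this(2) have "k2' = k2" using commits_Running_Ev k(3) by blast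
  ultimately show ?thesis using r unfolding barbed_related_def by (blast intro: weak_mstepI mstep.intros)
qed

lemma barbed_related_free_var:
  assumes "barbed_related C1 C2" "mtau\<^sup>*\<^sup>* C1 (Ev (FV f) \<pi> n)"
  shows "\<exists>C2'. weak_mstep C2 (FFree f) C2' \<and> barbed_related (Co \<pi> n) C2'"
proof -
  have "set (replicate f NSuc @ [NZ]) \<inter> Hidden = {}" by auto
  from barbed_related_test[OF assms(1) this represents_test_free_var[OF _ assms(2)]]
  obtain P1 Q1 w' k2' where r: "represents (comps P1) (Running (Co \<pi> n))"
    "represents (comps Q1) k2'" "barbed_equiv Hidden P1 Q1" "apath (Running C2) w' k2'"
    "mset w' = mset (replicate f NSuc @ [NZ])"
    by blast
  then have "set w' = set (replicate f NSuc @ [NZ])" by (metis set_mset_mset)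
  then have "set w' \<subseteq> {NSuc, NZ}" "NZ \<in> set w'" by auto
  then obtain g \<pi>2 n2 where g: "mtau\<^sup>*\<^sup>* C2 (Ev (FV g) \<pi>2 n2)" "w' = replicate g NSuc @ [NZ]"
    "commits\<^sup>=\<^sup>= (Running (Co \<pi>2 n2)) k2'"
    using apath_free_var r(4) by blast
  have "g = f" using arg_cong[OF r(5), of "\<lambda>M. count M NSuc"] g(2) by simp
  moreover have "k2' = Running (Co \<pi>2 n2)" using barbed_equiv_uncommitted r(1-3) g(3) by blast
  ultimately show ?thesis using r g unfolding barbed_related_def by (blast intro: weak_mstepI mstep.intros)
qed

lemma barbed_related_enter:
  assumes "barbed_related C1 C2" "mtau\<^sup>*\<^sup>* C1 (Co (t # \<pi>) n)"
  shows "\<exists>C2'. weak_mstep C2 FEnter C2' \<and> barbed_related (Ev t [] n) C2'"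
proof -
  have "commits\<^sup>=\<^sup>= (Running C1) (Entering t n)" using assms(2) unfolding commits_def by auto
  moreover have "astep (Entering t n) NEnter (Running (Ev t [] n))" by simp
  ultimately obtain P1 Q1 k1 k2 k2' where r: "represents (comps P1) (Running (Ev t [] n))"
    "represents (comps Q1) k2'" "barbed_equiv Hidden P1 Q1"
    and k: "commits\<^sup>=\<^sup>= (Running C2) k1" "astep k1 NEnter k2" "commits\<^sup>=\<^sup>= k2 k2'"
    using barbed_related_flag[OF assms(1)] flags_not_Hidden(2) by blast
  then obtain t2 \<pi>2 n2 where "mtau\<^sup>*\<^sup>* C2 (Co (t2 # \<pi>2) n2)" "k2 = Running (Ev t2 [] n2)"
    by (auto simp: commits_def)
  moreover from this(2) have "k2' = k2" using commits_Running_Ev k(3) by blast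
  ultimately show ?thesis using r unfolding barbed_related_def by (blast intro: weak_mstepI mstep.intros)
qed

lemma barbed_related_skip:
  assumes "barbed_related C1 C2" "mtau\<^sup>*\<^sup>* C1 (Co (t # \<pi>) n)"
  shows "\<exists>C2'. weak_mstep C2 FSkip C2' \<and> barbed_related (Co \<pi> n) C2'"
proof -
  have "commits\<^sup>=\<^sup>= (Running C1) (Skipping \<pi> n)" using assms(2) unfolding commits_def by auto
  moreover have "astep (Skipping \<pi> n) NSkip (Running (Co \<pi> n))" by simp
  ultimately obtain P1 Q1 k1 k2 k2' where r: "represents (comps P1) (Running (Co \<pi> n))"
    "represents (comps Q1) k2'" "barbed_equiv Hidden P1 Q1"
    and k: "commits\<^sup>=\<^sup>= (Running C2) k1" "astep k1 NSkip k2" "commits\<^sup>=\<^sup>= k2 k2'"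
    using barbed_related_flag[OF assms(1)] flags_not_Hidden(3) by blast
  then obtain t2 \<pi>2 n2 where "mtau\<^sup>*\<^sup>* C2 (Co (t2 # \<pi>2) n2)" "k2 = Running (Co \<pi>2 n2)"
    by (auto simp: commits_def)
  moreover from this(2) have "k2' = k2" using barbed_equiv_uncommitted r k(3) by blast
  ultimately show ?thesis using r unfolding barbed_related_def by (blast intro: weak_mstepI mstep.intros)
qed

lemma barbed_related_done:
  assumes "barbed_related C1 C2" "weak_mterm C1 F"
  shows "weak_mterm C2 F"
proof -
  obtain P Q where PQ: "represents (comps P) (Running C1)" "represents (comps Q) (Running C2)"
    "barbed_equiv Hidden P Q"
    using assms(1) unfolding barbed_related_def by blast
  from assms(2) obtain n where "mtau\<^sup>*\<^sup>* C1 (Co [] n)" "F = FDone"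
    unfolding weak_mterm_def by (auto elim: mterm.cases)
  then have "weak_barb Hidden P (BIn NDone)"
    by (intro astep_weak_in_barb[OF PQ(1), of _ NDone Halted]) auto
  then have "weak_barb Hidden Q (BIn NDone)" using barbed_equiv_weak_barb PQ(3) by blast
  then obtain k1 k2 where "commits\<^sup>=\<^sup>= (Running C2) k1" "astep k1 NDone k2"
    using weak_in_barb_astep PQ(2) by blast
  then obtain m where "mtau\<^sup>*\<^sup>* C2 (Co [] m)" using astep_uncommitted by fastforce
  then show ?thesis unfolding weak_mterm_def \<open>F = FDone\<close> by (blast intro: mterm.intros)
qed

theorem barbed_equiv_mach_bisimilar:
  assumes "wf_conf C" "wf_conf C'" "barbed_equiv Hidden (tr_conf C) (tr_conf C')"
  shows "mach_bisimilar C C'"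
proof (rule mach_bisimilarI[where R = barbed_related])
  show "symp barbed_related" unfolding symp_def barbed_related_def using barbed_equiv_sym by blast
  show "barbed_related C C'" unfolding barbed_related_def using represents_tr_conf assms by blast
  show "\<exists>C2'. weak_mstep C2 F C2' \<and> barbed_related C1' C2'"
    if "barbed_related C1 C2" "weak_mstep C1 F C1'" for C1 C2 F C1'
  proof -
    from that(2) obtain D where D: "mtau\<^sup>*\<^sup>* C1 D" "mstep D F C1'" unfolding weak_mstep_def by blast
    from D(2) show ?thesis
    proof cases
      case 1
      then show ?thesis using barbed_related_lam[OF that(1)] D(1) by simp
    next
      case 2
      then show ?thesis using barbed_related_free_var[OF that(1)] D(1) by simp
    next
      case 3
      then show ?thesis using barbed_related_enter[OF that(1)] D(1) by simp
    next
      case 4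
      then show ?thesis using barbed_related_skip[OF that(1)] D(1) by simp
    qed
  qed
qed (rule barbed_related_done)

theorem theorem4p14:
  assumes "wf_conf C" and "wf_conf C'"
  shows "mach_bisimilar C C' \<longleftrightarrow> barbed_equiv Hidden (tr_conf C) (tr_conf C')"
  using mach_bisimilar_barbed_equiv[OF assms] barbed_equiv_mach_bisimilar[OF assms] by blast

end
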